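(* Let $\gamma>0$ and let $R_W$ be any matrix with $W=R_W^\top R_W$. Suppose $\mu\in\mathbb{R}_+$, $P\in\mathbb{S}^{n_x}_{\succ0}$, $\tilde Z\in\mathbb{S}^{n_y}_{\succ0}$, $G\in\mathbb{R}^{n_x\times n_y}$, $Y\in\mathbb{R}^{n_y\times n_a}$ satisfy $$\begin{bmatrix}P & PA-GC & PB_\omega-GD_\omega\\ * & P & 0\\ * & * & I\end{bmatrix}\succ0,\qquad \begin{bmatrix}\tilde Z & \tilde ZC & \tilde ZD_\omega\\ * & P & 0\\ * & 0 & I\end{bmatrix}\succ0,$$ $$\begin{bmatrix}\begin{bmatrix}Y^\top D_a+D_a^\top Y & D_a^\top R_W^\top\\ R_WD_a & 2\mu I\end{bmatrix} & \begin{bmatrix}\Gamma_1 & 0\\ 0 & \mu I\end{bmatrix}\\ * & \begin{bmatrix}\Gamma_2 & 0\\ 0 & \mu I\end{bmatrix}\end{bmatrix}\succeq0,$$ where $\Gamma_1=\begin{bmatrix}Y^\top C & D_a^\top G^\top & Y^\top D_\omega\end{bmatrix}$ and $\Gamma_2=\mathrm{diag}\big((2+1/\gamma)^{-1}P,\ \tfrac1\gamma P,\ \tfrac12 I\big)$. Then with $L=P^{-1}G$ and $\lambda=1/\mu$, we have $\rho(A-LC)<1$ and $$\tfrac12D_a^\top(I-CL)^\top\Sigma_{r_\omega}^{-1}(L)(I-CL)D_a-\lambda D_a^\top WD_a\succeq0.$$ Hence minimizing $\mu$ subject to these LMIs yields an approximation (a feasible point with $\lambda=1/\mu$) of the one-step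 design problem $\max_{L,\lambda\in\mathbb{R}_+}\{\lambda:\ \tfrac12D_a^\top(I-CL)^\top\Sigma_{r_\omega}^{-1}(L)(I-CL)D_a-\lambda D_a^\top WD_a\succeq0,\ \rho(A-LC)<1\}$.
   Context: System: $x(k+1)=Ax(k)+Bu(k)+B_\omega\omega(k)$, $y(k)=Cx(k)+D_\omega\omega(k)+y_a(k)$, $x\in\mathbb{R}^{n_x}$, $y\in\mathbb{R}^{n_y}$, $\omega(k)\sim\mathcal N(0,I_{n_\omega})$ i.i.d., $(A,C)$ detectable, $(A,B_\omega)$ stabilizable; observer $\hat x(k+1)=A\hat x+Bu+L(y-C\hat x)$ with residual $r=y-C\hat x$. Bias injection attack $y_a(k)=D_a\bar a$ for $k\ge0$ (zero before), with $D_a\in\mathbb{R}^{n_y\times n_a}$ having entries $(j_i,i)=1$ for compromised sensor indices $j_1<\dots<j_{n_a}$ and zeros elsewhere; $W\in\mathbb{R}^{n_y\times n_y}$ symmetric positive semidefinite. $\rho$ is spectral radius, $\mathbb{R}_+$ the positive reals, $\mathbb{S}^n_{\succ0}$ the symmetric positive definite $n\times n$ matrices, $*$ denotes blocks determined by symmetry. For stabilizing $L$, $\Sigma_{\tilde x}(L)$ solves $\Sigma=(A-LC)\Sigma(A-LC)^\top+(B_\omega-LD_\omega)(B_\omega-LD_\omega)^\top$ and $\Sigma_{r_\omega}(L)=C\Sigma_{\tilde x}(L)C^\top+D_\omega D_\omega^\top$ (assumed invertible). *)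

theory Defs
  imports "Jordan_Normal_Form.Spectral_Radius" "Jordan_Normal_Form.Gauss_Jordan_Elimination"
begin

definition psd_mat :: "nat \<Rightarrow> real mat \<Rightarrow> bool" where
  "psd_mat n M \<longleftrightarrow> M \<in> carrier_mat n n \<and> transpose_mat M = M \<and>
     (\<forall>v \<in> carrier_vec n. 0 \<le> v \<bullet> (M *\<^sub>v v))"

definition pd_mat :: "nat \<Rightarrow> real mat \<Rightarrow> bool" where
  "pd_mat n M \<longleftrightarrow> M \<in> carrier_mat n n \<and> transpose_mat M = M \<and>
     (\<forall>v \<in> carrier_vec n. v \<noteq> 0\<^sub>v n \<longrightarrow> 0 < v \<bullet> (M *\<^sub>v v))"

definition rho :: "real mat \<Rightarrow> real" where
  "rho M = spectral_radius (map_mat complex_of_real M)"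

definition hcat :: "real mat \<Rightarrow> real mat \<Rightarrow> real mat" where
  "hcat X Z = mat (dim_row X) (dim_col X + dim_col Z)
     (\<lambda>(i,j). if j < dim_col X then X $$ (i,j) else Z $$ (i, j - dim_col X))"

definition vcat :: "real mat \<Rightarrow> real mat \<Rightarrow> real mat" where
  "vcat X Z = mat (dim_row X + dim_row Z) (dim_col X)
     (\<lambda>(i,j). if i < dim_row X then X $$ (i,j) else Z $$ (i - dim_row X, j))"

(* symmetric 3x3 block matrix [M11 M12 M13; * M22 M23; * * M33] *)
definition sym3 :: "real mat \<Rightarrow> real mat \<Rightarrow> real mat \<Rightarrow> real mat \<Rightarrow> real mat \<Rightarrow> real mat \<Rightarrow> real mat" where
  "sym3 M11 M12 M13 M22 M23 M33 =
     four_block_mat (four_block_mat M11 M12 (transpose_mat M12) M22)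
                    (vcat M13 M23)
                    (hcat (transpose_mat M13) (transpose_mat M23)) M33"

definition bdiag :: "real mat \<Rightarrow> real mat \<Rightarrow> real mat" where
  "bdiag X Z = four_block_mat X (0\<^sub>m (dim_row X) (dim_col Z)) (0\<^sub>m (dim_row Z) (dim_col X)) Z"

definition detectable :: "nat \<Rightarrow> nat \<Rightarrow> real mat \<Rightarrow> real mat \<Rightarrow> bool" where
  "detectable nx ny A C \<longleftrightarrow> (\<exists>L \<in> carrier_mat nx ny. rho (A - L * C) < 1)"

definition stabilizable :: "nat \<Rightarrow> nat \<Rightarrow> real mat \<Rightarrow> real mat \<Rightarrow> bool" where
  "stabilizable nx nw A B \<longleftrightarrow> (\<exists>K \<in> carrier_mat nw nx. rho (A - B * K) < 1)"

(* Sigma_xtilde(L): the solution of the Lyapunov equation (unique for stabilizing L) *)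
definition Sigma_xt :: "nat \<Rightarrow> real mat \<Rightarrow> real mat \<Rightarrow> real mat \<Rightarrow> real mat \<Rightarrow> real mat \<Rightarrow> real mat" where
  "Sigma_xt nx A C Bw Dw L = (THE S. S \<in> carrier_mat nx nx \<and>
     S = (A - L * C) * S * transpose_mat (A - L * C)
         + (Bw - L * Dw) * transpose_mat (Bw - L * Dw))"

definition Sigma_rw :: "nat \<Rightarrow> real mat \<Rightarrow> real mat \<Rightarrow> real mat \<Rightarrow> real mat \<Rightarrow> real mat \<Rightarrow> real mat" where
  "Sigma_rw nx A C Bw Dw L =
     C * Sigma_xt nx A C Bw Dw L * transpose_mat C + Dw * transpose_mat Dw"

(* attack matrix D_a selecting compromised sensors j 0 < ... < j (na-1) *)
definition attack_mat :: "nat \<Rightarrow> nat \<Rightarrow> (nat \<Rightarrow> nat) \<Rightarrow> real mat" where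
  "attack_mat ny na j = mat ny na (\<lambda>(r,c). if r = j c then 1 else 0)"

end

(*
  With L = P^-1 G the first LMI is the Schur complement form of
  [F H]^T P [F H] < diag(P, I) for the error dynamics F = A - L C, H = B_w - L D_w.
  Its w = 0 part makes x^T P x a strict Lyapunov function for F, so rho(F) < 1.
  Dually, P^-1 dominates one step of the Lyapunov recursion S |-> F S F^T + H H^T, hence
  the stationary error covariance, the convergent series sum_k F^k H H^T (F^k)^T, is
  bounded by P^-1, and Sigma_rw(L) <= C P^-1 C^T + D_w D_w^T.  Evaluating the third LMI at
  the minimiser of its block diagonal part yields a scalar inequality; together with
  completing the square for Sigma_rw(L)^-1 and Young's inequality for the cross term
  it gives (1/2) |T x|^2_{Sigma_rw^-1} >= (1/mu) |R_W D_a x|^2 with T = (I - C L) D_a.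
  The second LMI, detectability, stabilizability and the hypotheses on the sensor indices j
  are not needed: Sigma_rw(L) is bounded directly through P^-1 rather than through Zt.
*)
theory Submission
  imports Defs
begin

section \<open>Block matrices\<close>

lemma vcat_carrier_mat[simp]:
  "X \<in> carrier_mat r1 c \<Longrightarrow> Z \<in> carrier_mat r2 c \<Longrightarrow> vcat X Z \<in> carrier_mat (r1 + r2) c"
  unfolding vcat_def by auto

lemma hcat_carrier_mat[simp]:
  "X \<in> carrier_mat r c1 \<Longrightarrow> Z \<in> carrier_mat r c2 \<Longrightarrow> hcat X Z \<in> carrier_mat r (c1 + c2)"
  unfolding hcat_def by auto

lemma bdiag_carrier_mat[simp]:
  "X \<in> carrier_mat r1 c1 \<Longrightarrow> Z \<in> carrier_mat r2 c2 \<Longrightarrow> bdiag X Z \<in> carrier_mat (r1 + r2) (c1 + c2)"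
  unfolding bdiag_def by auto

lemma zero_mat_mult_vec[simp]: "v \<in> carrier_vec m \<Longrightarrow> 0\<^sub>m n m *\<^sub>v v = 0\<^sub>v n"
  by (intro eq_vecI) auto

lemma vcat_mult_vec:
  assumes "X \<in> carrier_mat r1 c" "Z \<in> carrier_mat r2 c" "w \<in> carrier_vec c"
  shows "vcat X Z *\<^sub>v w = (X *\<^sub>v w) @\<^sub>v (Z *\<^sub>v w)"
proof (rule eq_vecI)
  fix i assume "i < dim_vec ((X *\<^sub>v w) @\<^sub>v (Z *\<^sub>v w))"
  with assms have i: "i < r1 + r2" by auto
  have "row (vcat X Z) i = (if i < r1 then row X i else row Z (i - r1))"
    using assms i by (intro eq_vecI) (auto simp: vcat_def)
  with assms i show "(vcat X Z *\<^sub>v w) $ i = ((X *\<^sub>v w) @\<^sub>v (Z *\<^sub>v w)) $ i"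
    by (subst index_mult_mat_vec) (auto simp: vcat_def)
qed (use assms in \<open>auto simp: vcat_def\<close>)

lemma hcat_mult_vec:
  assumes X: "X \<in> carrier_mat r c1" and Z: "Z \<in> carrier_mat r c2"
    and a: "a \<in> carrier_vec c1" and b: "b \<in> carrier_vec c2"
  shows "hcat X Z *\<^sub>v (a @\<^sub>v b) = X *\<^sub>v a + Z *\<^sub>v b"
proof (rule eq_vecI)
  fix i assume "i < dim_vec (X *\<^sub>v a + Z *\<^sub>v b)"
  with X Z have i: "i < r" by auto
  have "row (hcat X Z) i = row X i @\<^sub>v row Z i"
    using X Z i by (intro eq_vecI) (auto simp: hcat_def)
  with X Z a b i show "(hcat X Z *\<^sub>v (a @\<^sub>v b)) $ i = (X *\<^sub>v a + Z *\<^sub>v b) $ i"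
    by (subst index_mult_mat_vec) (auto simp: hcat_def scalar_prod_append[of _ c1 _ c2])
qed (use X Z in \<open>auto simp: hcat_def carrier_matD\<close>)

lemma scalar_prod_four_block_mat_mult_vec:
  assumes "A \<in> carrier_mat n1 m1" "B \<in> carrier_mat n1 m2"
    and "C \<in> carrier_mat n2 m1" "D \<in> carrier_mat n2 m2"
    and "a \<in> carrier_vec m1" "d \<in> carrier_vec m2"
    and "x \<in> carrier_vec n1" "y \<in> carrier_vec n2"
  shows "(x @\<^sub>v y) \<bullet> (four_block_mat A B C D *\<^sub>v (a @\<^sub>v d)) =
    x \<bullet> (A *\<^sub>v a) + x \<bullet> (B *\<^sub>v d) + y \<bullet> (C *\<^sub>v a) + y \<bullet> (D *\<^sub>v d)"
  using assms by (simp add: four_block_mat_mult_vec scalar_prod_append[of _ n1 _ n2]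
      scalar_prod_add_distrib[of _ n1] scalar_prod_add_distrib[of _ n2] add.assoc)

lemma scalar_prod_bdiag_mult_vec:
  assumes "X \<in> carrier_mat n1 m1" "Z \<in> carrier_mat n2 m2"
    and "a \<in> carrier_vec m1" "d \<in> carrier_vec m2"
    and "x \<in> carrier_vec n1" "y \<in> carrier_vec n2"
  shows "(x @\<^sub>v y) \<bullet> (bdiag X Z *\<^sub>v (a @\<^sub>v d)) = x \<bullet> (X *\<^sub>v a) + y \<bullet> (Z *\<^sub>v (d :: real vec))"
  unfolding bdiag_def using assms
  by (subst scalar_prod_four_block_mat_mult_vec[of _ n1 m1 _ m2 _ n2]) auto

lemma scalar_prod_transpose_mult_vec:
  assumes "A \<in> carrier_mat r c" "x \<in> carrier_vec c" "y \<in> carrier_vec r"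
  shows "x \<bullet> (transpose_mat A *\<^sub>v y) = y \<bullet> (A *\<^sub>v (x :: 'a :: comm_semiring_0 vec))"
  using transpose_vec_mult_scalar[OF assms] comm_scalar_prod[of x c] assms
  by (metis mult_mat_vec_carrier transpose_carrier_mat)

lemma quadratic_form_sym3:
  assumes M11: "M11 \<in> carrier_mat n1 n1" and M12: "M12 \<in> carrier_mat n1 n2"
    and M13: "M13 \<in> carrier_mat n1 n3" and M22: "M22 \<in> carrier_mat n2 n2"
    and M23: "M23 \<in> carrier_mat n2 n3" and M33: "M33 \<in> carrier_mat n3 n3"
    and x: "x \<in> carrier_vec n1" and y: "y \<in> carrier_vec n2" and w: "w \<in> carrier_vec n3"
  shows "((x @\<^sub>v y) @\<^sub>v w) \<bullet> (sym3 M11 M12 M13 M22 M23 M33 *\<^sub>v ((x @\<^sub>v y) @\<^sub>v w)) =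
    x \<bullet> (M11 *\<^sub>v x) + 2 * (x \<bullet> (M12 *\<^sub>v y)) + 2 * (x \<bullet> (M13 *\<^sub>v w)) + y \<bullet> (M22 *\<^sub>v y)
    + 2 * (y \<bullet> (M23 *\<^sub>v w)) + w \<bullet> (M33 *\<^sub>v w)"
proof -
  have "four_block_mat M11 M12 (transpose_mat M12) M22 \<in> carrier_mat (n1 + n2) (n1 + n2)"
    and "vcat M13 M23 \<in> carrier_mat (n1 + n2) n3"
    and "hcat (transpose_mat M13) (transpose_mat M23) \<in> carrier_mat n3 (n1 + n2)"
    using assms by auto
  with assms show ?thesis
    unfolding sym3_def
    by (simp add: scalar_prod_four_block_mat_mult_vec[of _ "n1 + n2" "n1 + n2" _ n3 _ n3]
        scalar_prod_four_block_mat_mult_vec[of _ n1 n1 _ n2 _ n2]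
        vcat_mult_vec[OF M13 M23 w] hcat_mult_vec[of _ n3 n1 _ n2]
        scalar_prod_append[of _ n1 _ n2] scalar_prod_add_distrib[of _ n3] scalar_prod_transpose_mult_vec)
qed

lemma psd_four_block_mat_quadratic_form:
  fixes M N Q :: "real mat"
  assumes psd: "psd_mat (n + m) (four_block_mat M N (transpose_mat N) Q)"
    and M: "M \<in> carrier_mat n n" and N: "N \<in> carrier_mat n m" and Q: "Q \<in> carrier_mat m m"
    and u: "u \<in> carrier_vec n" and v: "v \<in> carrier_vec m"
  shows "0 \<le> u \<bullet> (M *\<^sub>v u) + 2 * (u \<bullet> (N *\<^sub>v v)) + v \<bullet> (Q *\<^sub>v v)"
proof -
  have "0 \<le> (u @\<^sub>v v) \<bullet> (four_block_mat M N (transpose_mat N) Q *\<^sub>v (u @\<^sub>v v))"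
    using psd u v unfolding psd_mat_def by auto
  also have "\<dots> = u \<bullet> (M *\<^sub>v u) + u \<bullet> (N *\<^sub>v v) + v \<bullet> (transpose_mat N *\<^sub>v u) + v \<bullet> (Q *\<^sub>v v)"
    using M N Q u v by (intro scalar_prod_four_block_mat_mult_vec) auto
  also have "v \<bullet> (transpose_mat N *\<^sub>v u) = u \<bullet> (N *\<^sub>v v)" by (rule scalar_prod_transpose_mult_vec[OF N v u])
  finally show ?thesis by simp
qed

lemma append_vec_eq_zero_iff:
  assumes "a \<in> carrier_vec n1" "b \<in> carrier_vec n2"
  shows "a @\<^sub>v b = 0\<^sub>v (n1 + n2) \<longleftrightarrow> a = 0\<^sub>v n1 \<and> b = (0\<^sub>v n2 :: 'a :: zero vec)"
proof -
  have "0\<^sub>v (n1 + n2) = 0\<^sub>v n1 @\<^sub>v (0\<^sub>v n2 :: 'a vec)" by (intro eq_vecI) auto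
  then show ?thesis using append_vec_eq[OF assms(1), of "0\<^sub>v n1" b "0\<^sub>v n2"] by simp
qed

section \<open>Quadratic forms and inverses\<close>

lemma mult_mat_vec_zero[simp]: "A \<in> carrier_mat n m \<Longrightarrow> A *\<^sub>v 0\<^sub>v m = (0\<^sub>v n :: 'a :: comm_ring_1 vec)"
  by (intro eq_vecI) auto

lemma smult_mat_mult_vec:
  "dim_vec v = dim_col A \<Longrightarrow> (c \<cdot>\<^sub>m A) *\<^sub>v v = c \<cdot>\<^sub>v (A *\<^sub>v (v :: 'a :: comm_ring_1 vec))"
  by (intro eq_vecI) (auto simp: scalar_prod_def sum_distrib_left ac_simps)

lemma transpose_smult_mat: "transpose_mat (c \<cdot>\<^sub>m A) = c \<cdot>\<^sub>m transpose_mat A"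
  by (intro eq_matI) auto

lemma scalar_prod_sym_mat_mult_vec:
  assumes "P \<in> carrier_mat n n" "transpose_mat P = P" "a \<in> carrier_vec n" "b \<in> carrier_vec n"
  shows "a \<bullet> (P *\<^sub>v b) = b \<bullet> (P *\<^sub>v (a :: 'a :: comm_semiring_0 vec))"
  using scalar_prod_transpose_mult_vec[of P n n a b] assms by simp

lemma quadratic_form_lincomb:
  fixes P :: "real mat"
  assumes P: "P \<in> carrier_mat n n" "transpose_mat P = P" and a: "a \<in> carrier_vec n" and b: "b \<in> carrier_vec n"
  shows "(s \<cdot>\<^sub>v a + t \<cdot>\<^sub>v b) \<bullet> (P *\<^sub>v (s \<cdot>\<^sub>v a + t \<cdot>\<^sub>v b)) =
    s\<^sup>2 * (a \<bullet> (P *\<^sub>v a)) + 2 * s * t * (a \<bullet> (P *\<^sub>v b)) + t\<^sup>2 * (b \<bullet> (P *\<^sub>v b))"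
proof -
  have "(s \<cdot>\<^sub>v a + t \<cdot>\<^sub>v b) \<bullet> (P *\<^sub>v (s \<cdot>\<^sub>v a + t \<cdot>\<^sub>v b)) =
    s * s * (a \<bullet> (P *\<^sub>v a)) + s * t * (a \<bullet> (P *\<^sub>v b)) + t * s * (b \<bullet> (P *\<^sub>v a)) + t * t * (b \<bullet> (P *\<^sub>v b))"
    using assms by (simp add: mult_add_distrib_mat_vec[of _ n n] mult_mat_vec[of _ n n]
        add_scalar_prod_distrib[of _ n] scalar_prod_add_distrib[of _ n] algebra_simps)
  then show ?thesis
    using scalar_prod_sym_mat_mult_vec[OF P a b] by (simp add: algebra_simps power2_eq_square)
qed

lemma quadratic_form_smult_minus:
  fixes A B :: "'a :: comm_ring_1 mat"
  assumes "A \<in> carrier_mat n n" "B \<in> carrier_mat n n" "x \<in> carrier_vec n"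
  shows "x \<bullet> ((c \<cdot>\<^sub>m A - d \<cdot>\<^sub>m B) *\<^sub>v x) = c * (x \<bullet> (A *\<^sub>v x)) - d * (x \<bullet> (B *\<^sub>v x))"
  using assms by (simp add: minus_mult_distrib_mat_vec[of _ n n] scalar_prod_minus_distrib[of x n] smult_mat_mult_vec)

lemma quadratic_form_congruence:
  fixes A Y :: "'a :: comm_ring_1 mat"
  assumes "A \<in> carrier_mat n m" "Y \<in> carrier_mat m m" "v \<in> carrier_vec n"
  shows "v \<bullet> ((A * Y * transpose_mat A) *\<^sub>v v) = (transpose_mat A *\<^sub>v v) \<bullet> (Y *\<^sub>v (transpose_mat A *\<^sub>v v))"
proof -
  have "(A * Y * transpose_mat A) *\<^sub>v v = A *\<^sub>v (Y *\<^sub>v (transpose_mat A *\<^sub>v v))"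
    using assms by (simp add: assoc_mult_mat_vec[of _ n m _ n v] assoc_mult_mat_vec[of A n m Y m])
  also have "v \<bullet> \<dots> = (transpose_mat A *\<^sub>v v) \<bullet> (Y *\<^sub>v (transpose_mat A *\<^sub>v v))"
    using assms by (intro transpose_vec_mult_scalar[symmetric]) auto
  finally show ?thesis .
qed

lemma transpose_congruence_mat:
  fixes A Y :: "'a :: comm_ring_1 mat"
  assumes "A \<in> carrier_mat n m" "Y \<in> carrier_mat m m"
  shows "transpose_mat (A * Y * transpose_mat A) = A * transpose_mat Y * transpose_mat A"
proof -
  have "transpose_mat (A * Y * transpose_mat A) = A * transpose_mat (A * Y)"
    using transpose_mult[of "A * Y" n m "transpose_mat A" n] assms by simp
  also have "transpose_mat (A * Y) = transpose_mat Y * transpose_mat A" by (rule transpose_mult[OF assms])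
  also have "A * (transpose_mat Y * transpose_mat A) = A * transpose_mat Y * transpose_mat A"
    using assms by (simp add: assoc_mult_mat[of A n m _ m _ n])
  finally show ?thesis .
qed

lemma quadratic_form_gram:
  fixes H :: "'a :: comm_ring_1 mat"
  assumes "H \<in> carrier_mat n m" "v \<in> carrier_vec n"
  shows "v \<bullet> ((H * transpose_mat H) *\<^sub>v v) = (transpose_mat H *\<^sub>v v) \<bullet> (transpose_mat H *\<^sub>v v)"
  using quadratic_form_congruence[of H n m "1\<^sub>m m" v] assms by simp

lemma quadratic_form_congruence_transpose:
  fixes A Y :: "'a :: comm_ring_1 mat"
  assumes "A \<in> carrier_mat m n" "Y \<in> carrier_mat m m" "x \<in> carrier_vec n"
  shows "x \<bullet> ((transpose_mat A * Y * A) *\<^sub>v x) = (A *\<^sub>v x) \<bullet> (Y *\<^sub>v (A *\<^sub>v x))"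
  using quadratic_form_congruence[of "transpose_mat A" n m Y x] assms by simp

lemma transpose_congruence_sym_mat:
  fixes A Y :: "'a :: comm_ring_1 mat"
  assumes "A \<in> carrier_mat m n" "Y \<in> carrier_mat m m" "transpose_mat Y = Y"
  shows "transpose_mat (transpose_mat A * Y * A) = transpose_mat A * Y * A"
  using transpose_congruence_mat[of "transpose_mat A" n m Y] assms by simp

lemma pd_mat_imp_psd_mat:
  assumes "pd_mat n P"
  shows "psd_mat n P"
  unfolding psd_mat_def
proof (intro conjI ballI)
  fix v :: "real vec" assume v: "v \<in> carrier_vec n"
  show "0 \<le> v \<bullet> (P *\<^sub>v v)"
  proof (cases "v = 0\<^sub>v n")
    case False
    with assms v show ?thesis unfolding pd_mat_def by (simp add: less_imp_le)
  qed (use assms in \<open>auto simp: pd_mat_def\<close>)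
qed (use assms in \<open>auto simp: pd_mat_def\<close>)

lemma psd_matD:
  assumes "psd_mat n P"
  shows "P \<in> carrier_mat n n" "transpose_mat P = P" "v \<in> carrier_vec n \<Longrightarrow> 0 \<le> v \<bullet> (P *\<^sub>v v)"
  using assms unfolding psd_mat_def by auto

lemma det_pd_mat_neq_0:
  assumes "pd_mat n P"
  shows "det P \<noteq> 0"
proof
  assume "det P = 0"
  then obtain v where v: "v \<in> carrier_vec n" "v \<noteq> 0\<^sub>v n" and "P *\<^sub>v v = 0\<^sub>v n"
    using det_0_iff_vec_prod_zero_field[of P n] assms unfolding pd_mat_def by blast
  moreover have "0 < v \<bullet> (P *\<^sub>v v)" using assms v unfolding pd_mat_def by simp
  ultimately show False by simp
qed

lemma det_invertible_mat_neq_0: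
  fixes S :: "'a :: field mat"
  assumes S: "S \<in> carrier_mat n n" and "invertible_mat S"
  shows "det S \<noteq> 0"
proof -
  from assms obtain B where "inverts_mat S B" "inverts_mat B S"
    unfolding invertible_mat_def by blast
  then have SB: "S * B = 1\<^sub>m n" and BS: "B * S = 1\<^sub>m (dim_row B)"
    using S unfolding inverts_mat_def by (simp_all add: carrier_matD)
  have "dim_col B = n" using arg_cong[OF SB, of dim_col] by simp
  moreover have "dim_row B = n" using arg_cong[OF BS, of dim_col] S by simp
  ultimately have B: "B \<in> carrier_mat n n" unfolding carrier_mat_def by blast
  have "det S * det B = det (S * B)" by (rule det_mult[OF S B, symmetric])
  also have "\<dots> = 1" unfolding SB by (rule det_one)
  finally show ?thesis by (metis mult_zero_left zero_neq_one)
qed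

lemma the_mat_inverse:
  fixes A :: "'a :: field mat"
  assumes A: "A \<in> carrier_mat n n" and det: "det A \<noteq> 0"
  shows "A * the (mat_inverse A) = 1\<^sub>m n" "the (mat_inverse A) * A = 1\<^sub>m n"
    "the (mat_inverse A) \<in> carrier_mat n n"
proof -
  have "mat_inverse A \<noteq> None"
  proof
    assume "mat_inverse A = None"
    from mat_inverse(1)[OF A this, where b = "()"] det_non_zero_imp_unit[OF A det, where b = "()"]
    show False by blast
  qed
  then obtain B where B: "mat_inverse A = Some B" by blast
  from mat_inverse(2)[OF A B] B
  show "A * the (mat_inverse A) = 1\<^sub>m n" "the (mat_inverse A) * A = 1\<^sub>m n"
    "the (mat_inverse A) \<in> carrier_mat n n" by simp_all
qed

lemma transpose_inverse_of_sym_mat: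
  fixes S Si :: "'a :: comm_ring_1 mat"
  assumes S: "S \<in> carrier_mat n n" "transpose_mat S = S" and Si: "Si \<in> carrier_mat n n"
    and inv: "S * Si = 1\<^sub>m n"
  shows "transpose_mat Si = Si"
proof -
  have "transpose_mat Si = transpose_mat Si * (S * Si)" using inv Si by simp
  also have "\<dots> = (transpose_mat Si * S) * Si" using S Si by (simp add: assoc_mult_mat[of _ n n _ n _ n])
  also have "transpose_mat Si * S = transpose_mat (S * Si)" using transpose_mult[OF S(1) Si] S(2) by simp
  finally show ?thesis using inv Si by simp
qed

lemma mult_inverse_mult_vec:
  fixes A B :: "'a :: comm_ring_1 mat"
  assumes "A \<in> carrier_mat n n" "B \<in> carrier_mat n n" "A * B = 1\<^sub>m n" "v \<in> carrier_vec n"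
  shows "A *\<^sub>v (B *\<^sub>v v) = v"
proof -
  have "A *\<^sub>v (B *\<^sub>v v) = (A * B) *\<^sub>v v" using assoc_mult_mat_vec[OF assms(1,2,4)] by simp
  also have "\<dots> = v" using assms(3,4) by simp
  finally show ?thesis .
qed

lemma quadratic_form_inverse:
  fixes P Pinv :: "'a :: comm_ring_1 mat"
  assumes P: "P \<in> carrier_mat n n" and Pinv: "Pinv \<in> carrier_mat n n" "P * Pinv = 1\<^sub>m n"
    and v: "v \<in> carrier_vec n"
  shows "v \<bullet> (Pinv *\<^sub>v v) = (Pinv *\<^sub>v v) \<bullet> (P *\<^sub>v (Pinv *\<^sub>v v))"
  using mult_inverse_mult_vec[OF P Pinv v] comm_scalar_prod[OF v mult_mat_vec_carrier[OF Pinv(1) v]] by simp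

text \<open>Completing the square: expand \<open>0 \<le> (z - Si t)\<^sup>T S (z - Si t)\<close>.\<close>
lemma two_scalar_prod_le_quadratic_forms:
  fixes S Si :: "real mat"
  assumes S: "psd_mat n S" and Si: "Si \<in> carrier_mat n n" "S * Si = 1\<^sub>m n"
    and z: "z \<in> carrier_vec n" and t: "t \<in> carrier_vec n"
  shows "2 * (z \<bullet> t) \<le> z \<bullet> (S *\<^sub>v z) + t \<bullet> (Si *\<^sub>v t)"
proof -
  note Sc = psd_matD(1,2)[OF S]
  define u where "u = Si *\<^sub>v t"
  have u: "u \<in> carrier_vec n" and Su: "S *\<^sub>v u = t"
    unfolding u_def using Si t Sc by (auto intro: mult_inverse_mult_vec)
  have "0 \<le> (z - u) \<bullet> (S *\<^sub>v (z - u))" using psd_matD(3)[OF S] z u by simp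
  also have "\<dots> = z \<bullet> (S *\<^sub>v z) - z \<bullet> t - u \<bullet> (S *\<^sub>v z) + u \<bullet> t"
  proof -
    have Sz: "S *\<^sub>v z \<in> carrier_vec n" using Sc z by simp
    have "S *\<^sub>v (z - u) = S *\<^sub>v z - t" using Sc z u Su by (simp add: mult_minus_distrib_mat_vec)
    then show ?thesis using Sz t
      by (simp add: minus_scalar_prod_distrib[OF z u] scalar_prod_minus_distrib[OF z]
          scalar_prod_minus_distrib[OF u])
  qed
  also have "u \<bullet> (S *\<^sub>v z) = z \<bullet> t"
    using scalar_prod_sym_mat_mult_vec[OF Sc u z] Su by simp
  also have "u \<bullet> t = t \<bullet> (Si *\<^sub>v t)" unfolding u_def by (rule comm_scalar_prod[OF u[unfolded u_def] t])
  finally show ?thesis by simp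
qed

lemma quadratic_form_at_minimizer:
  fixes P Pinv :: "real mat"
  assumes P: "P \<in> carrier_mat n n" and Pinv: "Pinv \<in> carrier_mat n n" "P * Pinv = 1\<^sub>m n"
    and c: "c \<noteq> 0" and l: "l \<in> carrier_vec n"
  shows "c * (((- 1 / c) \<cdot>\<^sub>v (Pinv *\<^sub>v l)) \<bullet> (P *\<^sub>v ((- 1 / c) \<cdot>\<^sub>v (Pinv *\<^sub>v l))))
    + 2 * (l \<bullet> ((- 1 / c) \<cdot>\<^sub>v (Pinv *\<^sub>v l))) = - (l \<bullet> (Pinv *\<^sub>v l)) / c"
proof -
  have m: "Pinv *\<^sub>v l \<in> carrier_vec n" using Pinv l by simp
  have "P *\<^sub>v ((- 1 / c) \<cdot>\<^sub>v (Pinv *\<^sub>v l)) = (- 1 / c) \<cdot>\<^sub>v l"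
    using P m mult_inverse_mult_vec[OF P Pinv l] by (simp add: mult_mat_vec)
  then show ?thesis
    using l m c comm_scalar_prod[OF m l] by (simp add: field_simps power2_eq_square)
qed

section \<open>Spectral radius\<close>

lemma real_mat_complex_eigenvector_Re_Im:
  fixes F :: "real mat"
  assumes F: "F \<in> carrier_mat n n" and v: "v \<in> carrier_vec n"
    and ev: "map_mat complex_of_real F *\<^sub>v v = l \<cdot>\<^sub>v v"
  shows "F *\<^sub>v map_vec Re v = Re l \<cdot>\<^sub>v map_vec Re v + (- Im l) \<cdot>\<^sub>v map_vec Im v"
    and "F *\<^sub>v map_vec Im v = Im l \<cdot>\<^sub>v map_vec Re v + Re l \<cdot>\<^sub>v map_vec Im v"
proof -
  have row: "(\<Sum>k<n. complex_of_real (F $$ (i, k)) * v $ k) = l * v $ i" if i: "i < n" for i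
    using arg_cong[OF ev, of "\<lambda>x. x $ i"] i F v by (simp add: scalar_prod_def row_def lessThan_atLeast0)
  have "(F *\<^sub>v map_vec Re v) $ i = Re l * Re (v $ i) - Im l * Im (v $ i)"
    and "(F *\<^sub>v map_vec Im v) $ i = Im l * Re (v $ i) + Re l * Im (v $ i)" if i: "i < n" for i
  proof -
    have "(F *\<^sub>v map_vec Re v) $ i = Re (\<Sum>k<n. complex_of_real (F $$ (i, k)) * v $ k)"
      using i F v by (simp add: scalar_prod_def row_def lessThan_atLeast0 Re_sum)
    then show "(F *\<^sub>v map_vec Re v) $ i = Re l * Re (v $ i) - Im l * Im (v $ i)"
      unfolding row[OF i] by simp
    have "(F *\<^sub>v map_vec Im v) $ i = Im (\<Sum>k<n. complex_of_real (F $$ (i, k)) * v $ k)"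
      using i F v by (simp add: scalar_prod_def row_def lessThan_atLeast0 Im_sum)
    then show "(F *\<^sub>v map_vec Im v) $ i = Im l * Re (v $ i) + Re l * Im (v $ i)"
      unfolding row[OF i] by simp
  qed
  with F v show "F *\<^sub>v map_vec Re v = Re l \<cdot>\<^sub>v map_vec Re v + (- Im l) \<cdot>\<^sub>v map_vec Im v"
    and "F *\<^sub>v map_vec Im v = Im l \<cdot>\<^sub>v map_vec Re v + Re l \<cdot>\<^sub>v map_vec Im v"
    by (auto intro!: eq_vecI)
qed

lemma complex_vec_zero_if_Re_Im_zero:
  assumes "v \<in> carrier_vec n" "map_vec Re v = 0\<^sub>v n" "map_vec Im v = 0\<^sub>v n"
  shows "v = 0\<^sub>v n"
proof (rule eq_vecI)
  fix i assume "i < dim_vec (0\<^sub>v n)"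
  then have i: "i < n" by simp
  have "Re (v $ i) = map_vec Re v $ i" "Im (v $ i) = map_vec Im v $ i" using assms(1) i by auto
  then have "Re (v $ i) = 0" "Im (v $ i) = 0" unfolding assms(2,3) using i by simp_all
  then show "v $ i = 0\<^sub>v n $ i" using i by (simp add: complex_eq_iff)
qed (use assms in simp)

lemma rho_mem_norm_spectrum:
  assumes "F \<in> carrier_mat n n" "0 < n"
  shows "rho F \<in> norm ` spectrum (map_mat complex_of_real F)"
  unfolding rho_def using assms by (intro spectral_radius_mem_max(1)) auto

text \<open>A quadratic Lyapunov function decreasing strictly along \<open>x \<mapsto> F x\<close> forces every
  eigenvalue into the open unit disc: for a complex eigenvector with real and imaginary
  parts \<open>a, b\<close>, the sum of the two quadratic forms is multiplied by \<open>|\<lambda>|\<^sup>2\<close>.\<close>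
lemma lyapunov_decrease_imp_rho_less_1:
  fixes F P :: "real mat"
  assumes F: "F \<in> carrier_mat n n" and P: "pd_mat n P" and n: "0 < n"
    and decrease: "\<And>y. y \<in> carrier_vec n \<Longrightarrow> y \<noteq> 0\<^sub>v n \<Longrightarrow>
      (F *\<^sub>v y) \<bullet> (P *\<^sub>v (F *\<^sub>v y)) < y \<bullet> (P *\<^sub>v y)"
  shows "rho F < 1"
proof -
  let ?Fc = "map_mat complex_of_real F"
  have Pc: "P \<in> carrier_mat n n" "transpose_mat P = P" using P unfolding pd_mat_def by auto
  have P_nonneg: "0 \<le> y \<bullet> (P *\<^sub>v y)" if "y \<in> carrier_vec n" for y
    using psd_matD(3)[OF pd_mat_imp_psd_mat[OF P] that] .
  have P_pos: "0 < y \<bullet> (P *\<^sub>v y)" if "y \<in> carrier_vec n" "y \<noteq> 0\<^sub>v n" for y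
    using P that unfolding pd_mat_def by blast
  have decrease': "(F *\<^sub>v y) \<bullet> (P *\<^sub>v (F *\<^sub>v y)) \<le> y \<bullet> (P *\<^sub>v y)" if y: "y \<in> carrier_vec n" for y
  proof (cases "y = 0\<^sub>v n")
    case True then show ?thesis using F Pc by simp
  qed (use decrease[OF y] in auto)
  have "norm l < 1" if ev: "eigenvalue ?Fc l" for l
  proof -
    obtain v where v: "v \<in> carrier_vec n" "v \<noteq> 0\<^sub>v n" "?Fc *\<^sub>v v = l \<cdot>\<^sub>v v"
      using ev F unfolding eigenvalue_def eigenvector_def by auto
    define a where "a = map_vec Re v"
    define b where "b = map_vec Im v"
    have a: "a \<in> carrier_vec n" and b: "b \<in> carrier_vec n" using v unfolding a_def b_def by auto
    note Fab = real_mat_complex_eigenvector_Re_Im[OF F v(1,3), folded a_def b_def]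
    have "a \<noteq> 0\<^sub>v n \<or> b \<noteq> 0\<^sub>v n"
      using complex_vec_zero_if_Re_Im_zero[OF v(1)] v(2) unfolding a_def b_def by blast
    then have lt: "(F *\<^sub>v a) \<bullet> (P *\<^sub>v (F *\<^sub>v a)) + (F *\<^sub>v b) \<bullet> (P *\<^sub>v (F *\<^sub>v b))
        < a \<bullet> (P *\<^sub>v a) + b \<bullet> (P *\<^sub>v b)"
      and pos: "0 < a \<bullet> (P *\<^sub>v a) + b \<bullet> (P *\<^sub>v b)"
      using decrease[OF a] decrease[OF b] decrease'[OF a] decrease'[OF b]
        P_nonneg[OF a] P_nonneg[OF b] P_pos[OF a] P_pos[OF b] by fastforce+
    have "(F *\<^sub>v a) \<bullet> (P *\<^sub>v (F *\<^sub>v a)) + (F *\<^sub>v b) \<bullet> (P *\<^sub>v (F *\<^sub>v b))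
        = (norm l)\<^sup>2 * (a \<bullet> (P *\<^sub>v a) + b \<bullet> (P *\<^sub>v b))"
      unfolding Fab quadratic_form_lincomb[OF Pc a b] by (simp add: cmod_power2 algebra_simps)
    with lt pos have "(norm l)\<^sup>2 < 1\<^sup>2" by simp
    then show ?thesis by (simp add: power_less_imp_less_base)
  qed
  then show ?thesis using rho_mem_norm_spectrum[OF F n] unfolding spectrum_def by auto
qed

lemma pow_smult_mat:
  "A \<in> carrier_mat n n \<Longrightarrow> (c \<cdot>\<^sub>m A) ^\<^sub>m k = (c ^ k) \<cdot>\<^sub>m (A ^\<^sub>m k :: 'a :: comm_ring_1 mat)"
proof (induct k)
  case (Suc k)
  have "c \<cdot>\<^sub>m (c ^ k \<cdot>\<^sub>m (A ^\<^sub>m k * A)) = (c ^ Suc k) \<cdot>\<^sub>m (A ^\<^sub>m k * A)"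
    by (intro eq_matI) auto
  with Suc show ?case
    by (simp add: mult_smult_assoc_mat[of _ n n] mult_smult_distrib[of _ n n])
qed (auto intro!: eq_matI)

lemma eigenvalue_smult_mat:
  fixes A :: "'a :: field mat"
  assumes A: "A \<in> carrier_mat n n" and c: "c \<noteq> 0" and ev: "eigenvalue (c \<cdot>\<^sub>m A) m"
  shows "eigenvalue A (m / c)"
proof -
  obtain v where v: "v \<in> carrier_vec n" "v \<noteq> 0\<^sub>v n" "(c \<cdot>\<^sub>m A) *\<^sub>v v = m \<cdot>\<^sub>v v"
    using ev A unfolding eigenvalue_def eigenvector_def by auto
  have "A *\<^sub>v v = (1 / c) \<cdot>\<^sub>v ((c \<cdot>\<^sub>m A) *\<^sub>v v)"
    using A v(1) c by (simp add: smult_mat_mult_vec smult_smult_assoc)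
  also have "\<dots> = (m / c) \<cdot>\<^sub>v v" unfolding v(3) by (simp add: smult_smult_assoc)
  finally show ?thesis using A v(1,2) unfolding eigenvalue_def eigenvector_def by auto
qed

text \<open>The Jordan normal form only bounds the powers of a matrix of spectral radius below one;
  applied to \<open>F / r\<close> with \<open>\<rho>(F) < r < 1\<close> it gives geometric decay.\<close>
lemma rho_less_1_imp_powers_decay:
  fixes F :: "real mat"
  assumes F: "F \<in> carrier_mat n n" and n: "0 < n" and rho: "rho F < 1"
  shows "\<exists>K r. 0 < r \<and> r < 1 \<and> (\<forall>k. norm_bound (F ^\<^sub>m k) (K * r ^ k))"
proof -
  let ?Fc = "map_mat complex_of_real F"
  have Fc: "?Fc \<in> carrier_mat n n" using F by auto
  have "0 \<le> rho F" using rho_mem_norm_spectrum[OF F n] by auto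
  define r where "r = (1 + rho F) / 2"
  have r: "0 < r" "r < 1" "rho F < r" using \<open>0 \<le> rho F\<close> rho unfolding r_def by auto
  define c where "c = complex_of_real (1 / r)"
  have c: "c \<noteq> 0" "norm c = 1 / r" using r unfolding c_def by (auto simp: norm_divide)
  let ?A = "c \<cdot>\<^sub>m ?Fc"
  have A: "?A \<in> carrier_mat n n" using Fc by auto
  have "norm m < 1" if "eigenvalue ?A m" for m
  proof -
    have "eigenvalue ?Fc (m / c)" by (rule eigenvalue_smult_mat[OF Fc c(1) that])
    then have "norm (m / c) \<le> rho F" unfolding rho_def
      by (intro spectral_radius_mem_max(2)[OF Fc n]) (auto simp: spectrum_def)
    then have "norm m \<le> rho F / r" using c r by (simp add: norm_divide field_simps)
    also have "\<dots> < 1" using r by simp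
    finally show ?thesis .
  qed
  moreover have "spectral_radius ?A \<in> norm ` spectrum ?A" by (rule spectral_radius_mem_max(1)[OF A n])
  ultimately have "spectral_radius ?A < 1" unfolding spectrum_def by auto
  then obtain K where K: "\<And>k. norm_bound (?A ^\<^sub>m k) K"
    using spectral_radius_jnf_norm_bound_less_1_upper_triangular[OF A] by auto
  have "norm_bound (F ^\<^sub>m k) (K * r ^ k)" for k
  proof
    fix i j assume "i < dim_row (F ^\<^sub>m k)" "j < dim_col (F ^\<^sub>m k)"
    then have ij: "i < n" "j < n" using pow_carrier_mat[OF F, of k] by auto
    have "?A ^\<^sub>m k = (c ^ k) \<cdot>\<^sub>m map_mat complex_of_real (F ^\<^sub>m k)"
      by (simp add: pow_smult_mat[OF Fc] of_real_hom.mat_hom_pow[OF F])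
    moreover have "norm ((?A ^\<^sub>m k) $$ (i, j)) \<le> K"
      using K[of k] ij pow_carrier_mat[OF A, of k] unfolding norm_bound_def by (simp only: carrier_matD)
    ultimately have "norm ((c ^ k) * complex_of_real ((F ^\<^sub>m k) $$ (i, j))) \<le> K"
      using ij F by simp
    then have "(1 / r) ^ k * norm ((F ^\<^sub>m k) $$ (i, j)) \<le> K"
      using c by (simp add: norm_mult norm_power)
    then show "norm ((F ^\<^sub>m k) $$ (i, j)) \<le> K * r ^ k" using r by (simp add: field_simps)
  qed
  with r show ?thesis by blast
qed

section \<open>The Lyapunov series\<close>

lemma pow_mat_Suc_left: "A \<in> carrier_mat n n \<Longrightarrow> A ^\<^sub>m Suc k = A * A ^\<^sub>m k"
proof (induct k)
  case (Suc k)
  then have "A ^\<^sub>m Suc (Suc k) = (A * A ^\<^sub>m k) * A" by simp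
  also have "\<dots> = A * (A ^\<^sub>m k * A)" using Suc by (simp add: assoc_mult_mat[of _ n n _ n _ n])
  finally show ?case by simp
qed simp

lemma norm_bound_transpose: "norm_bound A b \<Longrightarrow> norm_bound (transpose_mat A) b"
  unfolding norm_bound_def by auto

lemma congruence_mult_mat:
  assumes "A \<in> carrier_mat n n" "B \<in> carrier_mat n n" "X \<in> carrier_mat n n"
  shows "(A * B) * X * transpose_mat (A * B) = A * (B * X * transpose_mat B) * transpose_mat (A :: 'a :: comm_ring_1 mat)"
  using assms by (simp add: transpose_mult[of A n n B n] assoc_mult_mat[of _ n n _ n _ n])

lemma index_mult_mult_transpose_mat:
  fixes A X B :: "'a :: comm_ring_1 mat"
  assumes "A \<in> carrier_mat p n" "X \<in> carrier_mat n m" "B \<in> carrier_mat q m" "i < p" "j < q"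
  shows "(A * X * transpose_mat B) $$ (i, j) = (\<Sum>a<n. \<Sum>b<m. (A $$ (i, a) * B $$ (j, b)) * X $$ (a, b))"
  using assms by (simp add: scalar_prod_def lessThan_atLeast0 sum_distrib_left sum_distrib_right)
    (intro sum.cong refl, simp add: ac_simps)

lemma scalar_prod_mult_vec_sum:
  fixes X :: "'a :: comm_ring_1 mat"
  assumes "X \<in> carrier_mat n m" "v \<in> carrier_vec n" "w \<in> carrier_vec m"
  shows "v \<bullet> (X *\<^sub>v w) = (\<Sum>a<n. \<Sum>b<m. (v $ a * w $ b) * X $$ (a, b))"
  using assms by (simp add: scalar_prod_def lessThan_atLeast0 sum_distrib_left)
    (intro sum.cong refl, simp add: ac_simps)

lemma sums_le_const:
  fixes f :: "nat \<Rightarrow> real"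
  assumes "f sums s" "\<And>N. (\<Sum>k<N. f k) \<le> x"
  shows "s \<le> x"
  using assms suminf_le_const sums_iff by metis

lemma sums_bilinear:
  fixes X :: "nat \<Rightarrow> real mat"
  assumes "\<And>a b. a < n \<Longrightarrow> b < m \<Longrightarrow> (\<lambda>k. X k $$ (a, b)) sums (S $$ (a, b))"
  shows "(\<lambda>k. \<Sum>a<n. \<Sum>b<m. c a b * X k $$ (a, b)) sums (\<Sum>a<n. \<Sum>b<m. c a b * S $$ (a, b))"
  using assms by (intro sums_sum sums_mult) auto

definition lyapunov_series :: "nat \<Rightarrow> real mat \<Rightarrow> real mat \<Rightarrow> real mat" where
  "lyapunov_series n F X = mat n n (\<lambda>(i, j). \<Sum>k. (F ^\<^sub>m k * X * transpose_mat (F ^\<^sub>m k)) $$ (i, j))"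

lemma lyapunov_series_carrier[simp]: "lyapunov_series n F X \<in> carrier_mat n n"
  unfolding lyapunov_series_def by simp

context
  fixes n :: nat and F :: "real mat"
  assumes F: "F \<in> carrier_mat n n" and n: "0 < n" and rho: "rho F < 1"
begin

lemma lyapunov_term_summable:
  assumes X: "X \<in> carrier_mat n n" and ij: "i < n" "j < n"
  shows "summable (\<lambda>k. (F ^\<^sub>m k * X * transpose_mat (F ^\<^sub>m k)) $$ (i, j))"
proof -
  obtain K r where r: "0 < r" "r < 1" and K: "\<And>k. norm_bound (F ^\<^sub>m k) (K * r ^ k)"
    using rho_less_1_imp_powers_decay[OF F n rho] by blast
  define B where "B = Max {norm (X $$ (i, j)) | i j. i < dim_row X \<and> j < dim_col X}"
  have "norm_bound X B" unfolding B_def by (rule norm_bound_max)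
  then have "norm_bound (F ^\<^sub>m k * X * transpose_mat (F ^\<^sub>m k)) (K * r ^ k * B * n * (K * r ^ k) * n)" for k
    using F X K[of k] by (intro norm_bound_mult norm_bound_transpose) auto
  then have "norm ((F ^\<^sub>m k * X * transpose_mat (F ^\<^sub>m k)) $$ (i, j)) \<le> (K * K * B * n * n) * (r * r) ^ k" for k
    using ij F X unfolding norm_bound_def by (auto simp: power_mult_distrib algebra_simps)
  moreover have "summable (\<lambda>k. (K * K * B * n * n) * (r * r) ^ k)"
    using r mult_strict_mono[of r 1 r 1] by (intro summable_mult summable_geometric) (simp add: abs_mult)
  ultimately show ?thesis by (rule summable_comparison_test'[rotated])
qed

lemma lyapunov_series_sums:
  assumes "X \<in> carrier_mat n n" "i < n" "j < n"
  shows "(\<lambda>k. (F ^\<^sub>m k * X * transpose_mat (F ^\<^sub>m k)) $$ (i, j)) sums (lyapunov_series n F X $$ (i, j))"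
  using lyapunov_term_summable[OF assms] assms by (simp add: lyapunov_series_def summable_sums)

lemma lyapunov_series_fixpoint:
  assumes X: "X \<in> carrier_mat n n"
  shows "lyapunov_series n F X = F * lyapunov_series n F X * transpose_mat F + X"
proof (rule eq_matI)
  fix i j assume "i < dim_row (F * lyapunov_series n F X * transpose_mat F + X)"
    "j < dim_col (F * lyapunov_series n F X * transpose_mat F + X)"
  then have ij: "i < n" "j < n" using X by auto
  let ?T = "\<lambda>k. F ^\<^sub>m k * X * transpose_mat (F ^\<^sub>m k)"
  let ?c = "\<lambda>a b. F $$ (i, a) * F $$ (j, b)"
  have "?T (Suc k) $$ (i, j) = (\<Sum>a<n. \<Sum>b<n. ?c a b * ?T k $$ (a, b))" for k
  proof -
    have "?T (Suc k) = F * ?T k * transpose_mat F"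
      unfolding pow_mat_Suc_left[OF F] using F X by (intro congruence_mult_mat) auto
    then have "?T (Suc k) $$ (i, j) = (F * ?T k * transpose_mat F) $$ (i, j)" by simp
    also have "\<dots> = (\<Sum>a<n. \<Sum>b<n. ?c a b * ?T k $$ (a, b))"
      by (rule index_mult_mult_transpose_mat) (use F X ij in auto)
    finally show ?thesis .
  qed
  moreover have "(F * lyapunov_series n F X * transpose_mat F) $$ (i, j)
      = (\<Sum>a<n. \<Sum>b<n. ?c a b * lyapunov_series n F X $$ (a, b))"
    by (rule index_mult_mult_transpose_mat) (use F ij in auto)
  ultimately have "(\<lambda>k. ?T (Suc k) $$ (i, j)) sums (F * lyapunov_series n F X * transpose_mat F) $$ (i, j)"
    using X by (simp add: sums_bilinear lyapunov_series_sums)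
  then have "(\<lambda>k. ?T k $$ (i, j)) sums ((F * lyapunov_series n F X * transpose_mat F) $$ (i, j) + ?T 0 $$ (i, j))"
    by (rule iffD1[OF sums_Suc_iff[where f = "\<lambda>k. ?T k $$ (i, j)"]])
  moreover have "?T 0 = X" using F X by simp
  ultimately have "(\<lambda>k. ?T k $$ (i, j)) sums ((F * lyapunov_series n F X * transpose_mat F) $$ (i, j) + X $$ (i, j))"
    by simp
  from sums_unique2[OF lyapunov_series_sums[OF X ij] this]
  show "lyapunov_series n F X $$ (i, j) = (F * lyapunov_series n F X * transpose_mat F + X) $$ (i, j)"
    using F X ij by simp
qed (use F X in \<open>auto simp: lyapunov_series_def\<close>)

text \<open>The difference \<open>D\<close> of two solutions satisfies \<open>D = F\<^sup>k D (F\<^sup>k)\<^sup>T\<close> for all \<open>k\<close>,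
  so each entry of \<open>D\<close> is a constant summable sequence.\<close>
lemma lyapunov_fixpoint_unique:
  assumes X: "X \<in> carrier_mat n n" and S: "S \<in> carrier_mat n n"
    and fix_S: "S = F * S * transpose_mat F + X"
  shows "S = lyapunov_series n F X"
proof -
  let ?L = "lyapunov_series n F X"
  define D where "D = S - ?L"
  have D: "D \<in> carrier_mat n n" unfolding D_def using S by (simp add: minus_carrier_mat)
  have "D = (F * S * transpose_mat F + X) - (F * ?L * transpose_mat F + X)"
    unfolding D_def using fix_S lyapunov_series_fixpoint[OF X] by simp
  also have "\<dots> = F * S * transpose_mat F - F * ?L * transpose_mat F"
    using F S X by (intro eq_matI) auto
  also have "\<dots> = F * D * transpose_mat F"
    unfolding D_def using F S
    by (simp add: mult_minus_distrib_mat[of _ n n] minus_mult_distrib_mat[of _ n n])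
  finally have fix_D: "D = F * D * transpose_mat F" .
  have pow_D: "F ^\<^sub>m k * D * transpose_mat (F ^\<^sub>m k) = D" for k
  proof (induct k)
    case (Suc k)
    have "F ^\<^sub>m Suc k * D * transpose_mat (F ^\<^sub>m Suc k)
        = F * (F ^\<^sub>m k * D * transpose_mat (F ^\<^sub>m k)) * transpose_mat F"
      unfolding pow_mat_Suc_left[OF F] using F D by (intro congruence_mult_mat) auto
    with Suc fix_D show ?case by simp
  qed (use D F in simp)
  have "D $$ (i, j) = 0" if ij: "i < n" "j < n" for i j
  proof -
    have "summable (\<lambda>k. D $$ (i, j))" using lyapunov_term_summable[OF D ij] unfolding pow_D .
    then have "(\<lambda>k. D $$ (i, j)) \<longlonglongrightarrow> 0" by (rule summable_LIMSEQ_zero)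
    then show ?thesis by (simp add: LIMSEQ_const_iff)
  qed
  then show ?thesis unfolding D_def using S by (intro eq_matI) (auto simp: lyapunov_series_def)
qed

lemma the_lyapunov_solution:
  assumes "X \<in> carrier_mat n n"
  shows "(THE S. S \<in> carrier_mat n n \<and> S = F * S * transpose_mat F + X) = lyapunov_series n F X"
  using assms lyapunov_series_fixpoint lyapunov_fixpoint_unique by (intro the_equality) auto

lemma transpose_lyapunov_series:
  assumes X: "X \<in> carrier_mat n n" "transpose_mat X = X"
  shows "transpose_mat (lyapunov_series n F X) = lyapunov_series n F X"
proof (rule lyapunov_fixpoint_unique[OF X(1)])
  let ?L = "lyapunov_series n F X"
  have "transpose_mat ?L = transpose_mat (F * ?L * transpose_mat F + X)"
    using lyapunov_series_fixpoint[OF X(1)] by simp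
  also have "\<dots> = transpose_mat (F * ?L * transpose_mat F) + transpose_mat X"
    by (rule transpose_add) (use F X in auto)
  also have "\<dots> = F * transpose_mat ?L * transpose_mat F + X"
    using transpose_congruence_mat[OF F lyapunov_series_carrier] X by simp
  finally show "transpose_mat ?L = F * transpose_mat ?L * transpose_mat F + X" .
qed simp

lemma lyapunov_series_quadratic_form_sums:
  assumes H: "H \<in> carrier_mat n m" and v: "v \<in> carrier_vec n"
  shows "(\<lambda>k. (transpose_mat H *\<^sub>v (transpose_mat (F ^\<^sub>m k) *\<^sub>v v)) \<bullet>
      (transpose_mat H *\<^sub>v (transpose_mat (F ^\<^sub>m k) *\<^sub>v v)))
    sums (v \<bullet> (lyapunov_series n F (H * transpose_mat H) *\<^sub>v v))"
proof -
  let ?X = "H * transpose_mat H"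
  have X: "?X \<in> carrier_mat n n" using H by simp
  have "(transpose_mat H *\<^sub>v (transpose_mat (F ^\<^sub>m k) *\<^sub>v v)) \<bullet>
      (transpose_mat H *\<^sub>v (transpose_mat (F ^\<^sub>m k) *\<^sub>v v))
    = (\<Sum>a<n. \<Sum>b<n. (v $ a * v $ b) * (F ^\<^sub>m k * ?X * transpose_mat (F ^\<^sub>m k)) $$ (a, b))" for k
  proof -
    have Fk: "F ^\<^sub>m k \<in> carrier_mat n n" using F by (rule pow_carrier_mat)
    have "(transpose_mat H *\<^sub>v (transpose_mat (F ^\<^sub>m k) *\<^sub>v v)) \<bullet>
        (transpose_mat H *\<^sub>v (transpose_mat (F ^\<^sub>m k) *\<^sub>v v))
      = (transpose_mat (F ^\<^sub>m k) *\<^sub>v v) \<bullet> (?X *\<^sub>v (transpose_mat (F ^\<^sub>m k) *\<^sub>v v))"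
      by (rule quadratic_form_gram[symmetric]) (use Fk H v in auto)
    also have "\<dots> = v \<bullet> ((F ^\<^sub>m k * ?X * transpose_mat (F ^\<^sub>m k)) *\<^sub>v v)"
      by (rule quadratic_form_congruence[symmetric]) (use Fk H v in auto)
    also have "\<dots> = (\<Sum>a<n. \<Sum>b<n. (v $ a * v $ b) * (F ^\<^sub>m k * ?X * transpose_mat (F ^\<^sub>m k)) $$ (a, b))"
      by (rule scalar_prod_mult_vec_sum) (use F H v in auto)
    finally show ?thesis .
  qed
  moreover have "v \<bullet> (lyapunov_series n F ?X *\<^sub>v v)
    = (\<Sum>a<n. \<Sum>b<n. (v $ a * v $ b) * lyapunov_series n F ?X $$ (a, b))"
    by (rule scalar_prod_mult_vec_sum) (use v in auto)
  ultimately show ?thesis using X by (simp add: sums_bilinear lyapunov_series_sums)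
qed

lemma lyapunov_series_psd:
  assumes H: "H \<in> carrier_mat n m"
  shows "psd_mat n (lyapunov_series n F (H * transpose_mat H))"
  unfolding psd_mat_def
proof (intro conjI ballI)
  fix v :: "real vec" assume "v \<in> carrier_vec n"
  have "0 \<le> w \<bullet> w" for w :: "real vec" by (simp add: scalar_prod_def sum_nonneg)
  with sums_le[OF _ sums_zero lyapunov_series_quadratic_form_sums[OF H \<open>v \<in> carrier_vec n\<close>]]
  show "0 \<le> v \<bullet> (lyapunov_series n F (H * transpose_mat H) *\<^sub>v v)" by blast
qed (use H transpose_lyapunov_series[of "H * transpose_mat H"] in \<open>auto simp: transpose_mult[of H n m]\<close>)

lemma lyapunov_series_quadratic_form_le:
  assumes H: "H \<in> carrier_mat n m" and Q: "Q \<in> carrier_mat n n"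
    and Q_nonneg: "\<And>v. v \<in> carrier_vec n \<Longrightarrow> 0 \<le> v \<bullet> (Q *\<^sub>v v)"
    and step: "\<And>v. v \<in> carrier_vec n \<Longrightarrow>
      (transpose_mat H *\<^sub>v v) \<bullet> (transpose_mat H *\<^sub>v v)
      + (transpose_mat F *\<^sub>v v) \<bullet> (Q *\<^sub>v (transpose_mat F *\<^sub>v v)) \<le> v \<bullet> (Q *\<^sub>v v)"
    and v: "v \<in> carrier_vec n"
  shows "v \<bullet> (lyapunov_series n F (H * transpose_mat H) *\<^sub>v v) \<le> v \<bullet> (Q *\<^sub>v v)"
proof -
  define q where "q k v = (transpose_mat H *\<^sub>v (transpose_mat (F ^\<^sub>m k) *\<^sub>v v)) \<bullet>
      (transpose_mat H *\<^sub>v (transpose_mat (F ^\<^sub>m k) *\<^sub>v v))" for k v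
  have q_Suc: "q (Suc k) v = q k (transpose_mat F *\<^sub>v v)" if "v \<in> carrier_vec n" for k v
  proof -
    have "transpose_mat (F * F ^\<^sub>m k) = transpose_mat (F ^\<^sub>m k) * transpose_mat F"
      by (rule transpose_mult) (use F in auto)
    then show ?thesis
      unfolding q_def pow_mat_Suc_left[OF F] using F that by (simp add: assoc_mult_mat_vec[of _ n n _ n v])
  qed
  have partial_sums: "(\<Sum>k<N. q k v) \<le> v \<bullet> (Q *\<^sub>v v)" if "v \<in> carrier_vec n" for N v
    using that
  proof (induct N arbitrary: v)
    case (Suc N)
    have "(\<Sum>k<Suc N. q k v) = q 0 v + (\<Sum>k<N. q k (transpose_mat F *\<^sub>v v))"
      unfolding sum.lessThan_Suc_shift using q_Suc[OF Suc(2)] by simp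
    also have "\<dots> \<le> q 0 v + (transpose_mat F *\<^sub>v v) \<bullet> (Q *\<^sub>v (transpose_mat F *\<^sub>v v))"
      using Suc F by simp
    also have "\<dots> \<le> v \<bullet> (Q *\<^sub>v v)" using step[OF Suc(2)] Suc(2) F unfolding q_def by simp
    finally show ?case .
  qed (use Q_nonneg in simp)
  from lyapunov_series_quadratic_form_sums[OF H v, folded q_def] partial_sums[OF v]
  show ?thesis by (rule sums_le_const)
qed

end

section \<open>The observer LMI\<close>

text \<open>The first LMI is the Schur complement form of
  \<open>[F H]\<^sup>T P [F H] \<prec> diag(P, I)\<close>; evaluating it at \<open>(-(F y + H w), y, w)\<close> gives the
  strict dissipation inequality of the estimation error dynamics.\<close>
lemma pd_sym3_imp_strict_dissipation:
  fixes P F H :: "real mat"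
  assumes P: "P \<in> carrier_mat n n" and F: "F \<in> carrier_mat n n" and H: "H \<in> carrier_mat n m"
    and LMI: "pd_mat (n + n + m) (sym3 P (P * F) (P * H) P (0\<^sub>m n m) (1\<^sub>m m))"
    and y: "y \<in> carrier_vec n" and w: "w \<in> carrier_vec m" and nonzero: "y \<noteq> 0\<^sub>v n \<or> w \<noteq> 0\<^sub>v m"
  shows "(F *\<^sub>v y + H *\<^sub>v w) \<bullet> (P *\<^sub>v (F *\<^sub>v y + H *\<^sub>v w)) < y \<bullet> (P *\<^sub>v y) + w \<bullet> w"
proof -
  define u where "u = F *\<^sub>v y + H *\<^sub>v w"
  have u: "u \<in> carrier_vec n" unfolding u_def using F H y w by simp
  have "((- u) @\<^sub>v y) @\<^sub>v w \<noteq> 0\<^sub>v (n + n + m)"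
    using append_vec_eq_zero_iff[of "(- u) @\<^sub>v y" "n + n" w m] append_vec_eq_zero_iff[of "- u" n y n]
      u y w nonzero by auto
  then have "0 < (((- u) @\<^sub>v y) @\<^sub>v w) \<bullet> (sym3 P (P * F) (P * H) P (0\<^sub>m n m) (1\<^sub>m m) *\<^sub>v (((- u) @\<^sub>v y) @\<^sub>v w))"
    using LMI u y w unfolding pd_mat_def by auto
  also have "\<dots> = (- u) \<bullet> (P *\<^sub>v (- u)) + 2 * ((- u) \<bullet> ((P * F) *\<^sub>v y)) + 2 * ((- u) \<bullet> ((P * H) *\<^sub>v w))
      + y \<bullet> (P *\<^sub>v y) + w \<bullet> w"
    using P F H u y w by (subst quadratic_form_sym3) auto
  also have "\<dots> = y \<bullet> (P *\<^sub>v y) + w \<bullet> w - u \<bullet> (P *\<^sub>v u)"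
  proof -
    have "(- u) \<bullet> ((P * F) *\<^sub>v y) + (- u) \<bullet> ((P * H) *\<^sub>v w) = - (u \<bullet> (P *\<^sub>v u))"
      unfolding u_def using P F H y w
      by (simp add: mult_add_distrib_mat_vec[of P n n] scalar_prod_add_distrib[of _ n])
    moreover have "P *\<^sub>v (- u) = - (P *\<^sub>v u)" using P u by (intro eq_vecI) auto
    then have "(- u) \<bullet> (P *\<^sub>v (- u)) = u \<bullet> (P *\<^sub>v u)" using P u by simp
    ultimately show ?thesis by simp
  qed
  finally show ?thesis unfolding u_def by simp
qed

lemma pd_sym3_imp_dissipation:
  fixes P F H :: "real mat"
  assumes P: "P \<in> carrier_mat n n" and F: "F \<in> carrier_mat n n" and H: "H \<in> carrier_mat n m"
    and LMI: "pd_mat (n + n + m) (sym3 P (P * F) (P * H) P (0\<^sub>m n m) (1\<^sub>m m))"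
    and y: "y \<in> carrier_vec n" and w: "w \<in> carrier_vec m"
  shows "(F *\<^sub>v y + H *\<^sub>v w) \<bullet> (P *\<^sub>v (F *\<^sub>v y + H *\<^sub>v w)) \<le> y \<bullet> (P *\<^sub>v y) + w \<bullet> w"
proof (cases "y = 0\<^sub>v n \<and> w = 0\<^sub>v m")
  case True
  then show ?thesis using P F H by simp
next
  case False
  with pd_sym3_imp_strict_dissipation[OF assms] show ?thesis by auto
qed

text \<open>Dualising the dissipation inequality: with \<open>y = P\<^sup>-\<^sup>1 F\<^sup>T v\<close>, \<open>w = H\<^sup>T v\<close> and
  \<open>u = F y + H w\<close>, completing the square \<open>2 v\<^sup>T u \<le> u\<^sup>T P u + v\<^sup>T P\<^sup>-\<^sup>1 v\<close> shows that
  \<open>P\<^sup>-\<^sup>1\<close> dominates one step of the Lyapunov recursion for \<open>F\<^sup>T\<close>.\<close>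
lemma dissipation_imp_inverse_lyapunov_step:
  fixes P Pinv F H :: "real mat"
  assumes P: "psd_mat n P" and Pinv: "Pinv \<in> carrier_mat n n" "P * Pinv = 1\<^sub>m n"
    and F: "F \<in> carrier_mat n n" and H: "H \<in> carrier_mat n m"
    and diss: "\<And>y w. y \<in> carrier_vec n \<Longrightarrow> w \<in> carrier_vec m \<Longrightarrow>
      (F *\<^sub>v y + H *\<^sub>v w) \<bullet> (P *\<^sub>v (F *\<^sub>v y + H *\<^sub>v w)) \<le> y \<bullet> (P *\<^sub>v y) + w \<bullet> w"
    and v: "v \<in> carrier_vec n"
  shows "(transpose_mat H *\<^sub>v v) \<bullet> (transpose_mat H *\<^sub>v v)
    + (transpose_mat F *\<^sub>v v) \<bullet> (Pinv *\<^sub>v (transpose_mat F *\<^sub>v v)) \<le> v \<bullet> (Pinv *\<^sub>v v)"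
proof -
  note Pc = psd_matD(1)[OF P]
  define f where "f = transpose_mat F *\<^sub>v v"
  define y where "y = Pinv *\<^sub>v f"
  define w where "w = transpose_mat H *\<^sub>v v"
  define u where "u = F *\<^sub>v y + H *\<^sub>v w"
  have f: "f \<in> carrier_vec n" and y: "y \<in> carrier_vec n" and w: "w \<in> carrier_vec m"
    and u: "u \<in> carrier_vec n"
    unfolding f_def y_def w_def u_def using F H Pinv v by auto
  have yPy: "y \<bullet> (P *\<^sub>v y) = f \<bullet> (Pinv *\<^sub>v f)"
    unfolding y_def using quadratic_form_inverse[OF Pc Pinv f] ..
  have "v \<bullet> u = y \<bullet> f + w \<bullet> w"
    unfolding u_def f_def w_def using F H v y w
    by (simp add: scalar_prod_add_distrib[of v n] scalar_prod_transpose_mult_vec[of _ n])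
  also have "y \<bullet> f = f \<bullet> (Pinv *\<^sub>v f)" unfolding y_def by (rule comm_scalar_prod[OF _ f]) (use Pinv f in simp)
  finally have vu: "v \<bullet> u = f \<bullet> (Pinv *\<^sub>v f) + w \<bullet> w" .
  have "2 * (u \<bullet> v) \<le> u \<bullet> (P *\<^sub>v u) + v \<bullet> (Pinv *\<^sub>v v)"
    by (rule two_scalar_prod_le_quadratic_forms[OF P Pinv u v])
  moreover have "u \<bullet> (P *\<^sub>v u) \<le> f \<bullet> (Pinv *\<^sub>v f) + w \<bullet> w"
    using diss[OF y w] yPy unfolding u_def by simp
  ultimately show ?thesis using vu comm_scalar_prod[OF u v] unfolding f_def w_def by simp
qed

lemma pd_sym3_imp_rho_less_1:
  fixes P F H :: "real mat"
  assumes n: "0 < n" and P: "pd_mat n P" and F: "F \<in> carrier_mat n n" and H: "H \<in> carrier_mat n m"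
    and LMI: "pd_mat (n + n + m) (sym3 P (P * F) (P * H) P (0\<^sub>m n m) (1\<^sub>m m))"
  shows "rho F < 1"
proof (rule lyapunov_decrease_imp_rho_less_1[OF F P n])
  fix y :: "real vec" assume "y \<in> carrier_vec n" "y \<noteq> 0\<^sub>v n"
  with pd_sym3_imp_strict_dissipation[OF psd_matD(1)[OF pd_mat_imp_psd_mat[OF P]] F H LMI, of y "0\<^sub>v m"] F H
  show "(F *\<^sub>v y) \<bullet> (P *\<^sub>v (F *\<^sub>v y)) < y \<bullet> (P *\<^sub>v y)" by simp
qed

lemma pd_sym3_imp_lyapunov_series_le_inverse:
  fixes P Pinv F H :: "real mat"
  assumes n: "0 < n" and P: "pd_mat n P" and Pinv: "Pinv \<in> carrier_mat n n" "P * Pinv = 1\<^sub>m n"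
    and F: "F \<in> carrier_mat n n" and H: "H \<in> carrier_mat n m"
    and LMI: "pd_mat (n + n + m) (sym3 P (P * F) (P * H) P (0\<^sub>m n m) (1\<^sub>m m))"
    and v: "v \<in> carrier_vec n"
  shows "v \<bullet> (lyapunov_series n F (H * transpose_mat H) *\<^sub>v v) \<le> v \<bullet> (Pinv *\<^sub>v v)"
proof -
  have P': "psd_mat n P" by (rule pd_mat_imp_psd_mat[OF P])
  note Pc = psd_matD(1)[OF P']
  have rho: "rho F < 1" by (rule pd_sym3_imp_rho_less_1[OF n P F H LMI])
  show ?thesis
  proof (rule lyapunov_series_quadratic_form_le[OF F n rho H Pinv(1) _ _ v])
    fix v :: "real vec" assume v: "v \<in> carrier_vec n"
    show "0 \<le> v \<bullet> (Pinv *\<^sub>v v)"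
      unfolding quadratic_form_inverse[OF Pc Pinv v] using Pinv v by (intro psd_matD(3)[OF P']) simp
    show "(transpose_mat H *\<^sub>v v) \<bullet> (transpose_mat H *\<^sub>v v)
      + (transpose_mat F *\<^sub>v v) \<bullet> (Pinv *\<^sub>v (transpose_mat F *\<^sub>v v)) \<le> v \<bullet> (Pinv *\<^sub>v v)"
      by (rule dissipation_imp_inverse_lyapunov_step[OF P' Pinv F H
            pd_sym3_imp_dissipation[OF Pc F H LMI] v])
  qed
qed

lemma innovation_covariance_psd_le:
  fixes Sigma Pinv C Dw :: "real mat"
  assumes Sigma: "psd_mat nx Sigma" and C: "C \<in> carrier_mat ny nx" and Dw: "Dw \<in> carrier_mat ny nw"
    and le: "\<And>v. v \<in> carrier_vec nx \<Longrightarrow> v \<bullet> (Sigma *\<^sub>v v) \<le> v \<bullet> (Pinv *\<^sub>v v)"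
  shows "psd_mat ny (C * Sigma * transpose_mat C + Dw * transpose_mat Dw)"
    and "z \<in> carrier_vec ny \<Longrightarrow> z \<bullet> ((C * Sigma * transpose_mat C + Dw * transpose_mat Dw) *\<^sub>v z)
      \<le> (transpose_mat C *\<^sub>v z) \<bullet> (Pinv *\<^sub>v (transpose_mat C *\<^sub>v z))
        + (transpose_mat Dw *\<^sub>v z) \<bullet> (transpose_mat Dw *\<^sub>v z)"
proof -
  note Sc = psd_matD(1,2)[OF Sigma]
  have qf: "z \<bullet> ((C * Sigma * transpose_mat C + Dw * transpose_mat Dw) *\<^sub>v z)
      = (transpose_mat C *\<^sub>v z) \<bullet> (Sigma *\<^sub>v (transpose_mat C *\<^sub>v z))
        + (transpose_mat Dw *\<^sub>v z) \<bullet> (transpose_mat Dw *\<^sub>v z)" if z: "z \<in> carrier_vec ny" for z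
  proof -
    have cA: "C * Sigma * transpose_mat C \<in> carrier_mat ny ny"
      and cB: "Dw * transpose_mat Dw \<in> carrier_mat ny ny" using C Dw Sc by auto
    have "z \<bullet> ((C * Sigma * transpose_mat C + Dw * transpose_mat Dw) *\<^sub>v z)
        = z \<bullet> ((C * Sigma * transpose_mat C) *\<^sub>v z) + z \<bullet> ((Dw * transpose_mat Dw) *\<^sub>v z)"
      by (simp only: add_mult_distrib_mat_vec[OF cA cB z]
          scalar_prod_add_distrib[OF z mult_mat_vec_carrier[OF cA z] mult_mat_vec_carrier[OF cB z]])
    then show ?thesis
      unfolding quadratic_form_congruence[OF C Sc(1) z] quadratic_form_gram[OF Dw z] .
  qed
  show "z \<in> carrier_vec ny \<Longrightarrow> z \<bullet> ((C * Sigma * transpose_mat C + Dw * transpose_mat Dw) *\<^sub>v z)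
      \<le> (transpose_mat C *\<^sub>v z) \<bullet> (Pinv *\<^sub>v (transpose_mat C *\<^sub>v z))
        + (transpose_mat Dw *\<^sub>v z) \<bullet> (transpose_mat Dw *\<^sub>v z)"
    using qf le C by simp
  have "0 \<le> w \<bullet> w" for w :: "real vec" by (simp add: scalar_prod_def sum_nonneg)
  then have "0 \<le> z \<bullet> ((C * Sigma * transpose_mat C + Dw * transpose_mat Dw) *\<^sub>v z)"
    if "z \<in> carrier_vec ny" for z
    using qf[OF that] psd_matD(3)[OF Sigma, of "transpose_mat C *\<^sub>v z"] C that by simp
  moreover have "transpose_mat (C * Sigma * transpose_mat C + Dw * transpose_mat Dw)
      = C * Sigma * transpose_mat C + Dw * transpose_mat Dw"
    using C Dw Sc transpose_congruence_mat[OF C Sc(1)] transpose_mult[OF Dw, of "transpose_mat Dw" ny]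
    by (simp add: transpose_add[of _ ny ny])
  ultimately show "psd_mat ny (C * Sigma * transpose_mat C + Dw * transpose_mat Dw)"
    unfolding psd_mat_def using C Dw Sc by auto
qed

lemma mult_minus_inverse_mult:
  fixes P Pinv A G C :: "'a :: comm_ring_1 mat"
  assumes P: "P \<in> carrier_mat n n" and Pinv: "Pinv \<in> carrier_mat n n" "P * Pinv = 1\<^sub>m n"
    and A: "A \<in> carrier_mat n m" and G: "G \<in> carrier_mat n k" and C: "C \<in> carrier_mat k m"
  shows "P * (A - Pinv * G * C) = P * A - G * C"
proof -
  have "P * (Pinv * G * C) = (P * Pinv) * G * C"
    using P Pinv(1) G C by (simp add: assoc_mult_mat[of _ n n _ n _ k] assoc_mult_mat[of _ n n _ k _ m])
  then show ?thesis using P Pinv A G C by (simp add: mult_minus_distrib_mat[of P n n])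
qed

lemma observer_lmi_imp_stability_and_covariance_bound:
  fixes A C Bw Dw L P Pinv :: "real mat"
  assumes nx: "0 < nx" and P: "pd_mat nx P" and Pinv: "Pinv \<in> carrier_mat nx nx" "P * Pinv = 1\<^sub>m nx"
    and A: "A \<in> carrier_mat nx nx" and C: "C \<in> carrier_mat ny nx"
    and Bw: "Bw \<in> carrier_mat nx nw" and Dw: "Dw \<in> carrier_mat ny nw" and L: "L \<in> carrier_mat nx ny"
    and LMI: "pd_mat (nx + nx + nw) (sym3 P (P * (A - L * C)) (P * (Bw - L * Dw)) P (0\<^sub>m nx nw) (1\<^sub>m nw))"
  shows "rho (A - L * C) < 1" and "psd_mat ny (Sigma_rw nx A C Bw Dw L)"
    and "z \<in> carrier_vec ny \<Longrightarrow> z \<bullet> (Sigma_rw nx A C Bw Dw L *\<^sub>v z)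
      \<le> (transpose_mat C *\<^sub>v z) \<bullet> (Pinv *\<^sub>v (transpose_mat C *\<^sub>v z)) + (transpose_mat Dw *\<^sub>v z) \<bullet> (transpose_mat Dw *\<^sub>v z)"
proof -
  define F where "F = A - L * C"
  define H where "H = Bw - L * Dw"
  have F: "F \<in> carrier_mat nx nx" and H: "H \<in> carrier_mat nx nw"
    unfolding F_def H_def using A C Bw Dw L by (auto simp: minus_carrier_mat)
  show rho: "rho (A - L * C) < 1"
    using pd_sym3_imp_rho_less_1[OF nx P F H LMI[folded F_def H_def]] unfolding F_def .
  have "Sigma_rw nx A C Bw Dw L
      = C * lyapunov_series nx F (H * transpose_mat H) * transpose_mat C + Dw * transpose_mat Dw"
    unfolding Sigma_rw_def Sigma_xt_def F_def[symmetric] H_def[symmetric]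
    using the_lyapunov_solution[OF F nx rho[folded F_def]] H by simp
  from innovation_covariance_psd_le[OF lyapunov_series_psd[OF F nx rho[folded F_def] H] C Dw
      pd_sym3_imp_lyapunov_series_le_inverse[OF nx P Pinv F H LMI[folded F_def H_def]], folded this]
  show "psd_mat ny (Sigma_rw nx A C Bw Dw L)"
    and "z \<in> carrier_vec ny \<Longrightarrow> z \<bullet> (Sigma_rw nx A C Bw Dw L *\<^sub>v z)
      \<le> (transpose_mat C *\<^sub>v z) \<bullet> (Pinv *\<^sub>v (transpose_mat C *\<^sub>v z)) + (transpose_mat Dw *\<^sub>v z) \<bullet> (transpose_mat Dw *\<^sub>v z)"
    by auto
qed

section \<open>The attack sensitivity LMI\<close>

text \<open>The matrix \<open>[M, N; N\<^sup>T, Q]\<close> of LMI3, with \<open>\<Gamma>\<^sub>2 = diag(c\<^sub>1 P, c\<^sub>2 P, I/2)\<close>.\<close>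
definition lmi3_mat :: "nat \<Rightarrow> nat \<Rightarrow> real mat \<Rightarrow> real mat \<Rightarrow> real mat \<Rightarrow> real mat \<Rightarrow> real mat \<Rightarrow>
    real mat \<Rightarrow> real mat \<Rightarrow> real \<Rightarrow> real \<Rightarrow> real \<Rightarrow> real mat" where
  "lmi3_mat nw nr Y Da RW C G Dw P c1 c2 mu =
    four_block_mat
      (four_block_mat (transpose_mat Y * Da + transpose_mat Da * Y)
        (transpose_mat Da * transpose_mat RW) (RW * Da) ((2 * mu) \<cdot>\<^sub>m 1\<^sub>m nr))
      (bdiag (hcat (hcat (transpose_mat Y * C) (transpose_mat Da * transpose_mat G))
        (transpose_mat Y * Dw)) (mu \<cdot>\<^sub>m 1\<^sub>m nr))
      (transpose_mat (bdiag (hcat (hcat (transpose_mat Y * C) (transpose_mat Da * transpose_mat G))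
        (transpose_mat Y * Dw)) (mu \<cdot>\<^sub>m 1\<^sub>m nr)))
      (bdiag (bdiag (bdiag (c1 \<cdot>\<^sub>m P) (c2 \<cdot>\<^sub>m P)) ((1 / 2) \<cdot>\<^sub>m 1\<^sub>m nw)) (mu \<cdot>\<^sub>m 1\<^sub>m nr))"

lemma lmi3_block11_quadratic_form:
  fixes Y Da RW :: "real mat"
  assumes Y: "Y \<in> carrier_mat ny na" and Da: "Da \<in> carrier_mat ny na" and RW: "RW \<in> carrier_mat nr ny"
    and x: "x \<in> carrier_vec na" and r: "r \<in> carrier_vec nr"
  shows "(x @\<^sub>v r) \<bullet> (four_block_mat (transpose_mat Y * Da + transpose_mat Da * Y)
      (transpose_mat Da * transpose_mat RW) (RW * Da) ((2 * mu) \<cdot>\<^sub>m 1\<^sub>m nr) *\<^sub>v (x @\<^sub>v r))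
    = 2 * ((Y *\<^sub>v x) \<bullet> (Da *\<^sub>v x)) + 2 * (r \<bullet> (RW *\<^sub>v (Da *\<^sub>v x))) + 2 * mu * (r \<bullet> r)"
proof -
  define a where "a = Y *\<^sub>v x"
  define d where "d = Da *\<^sub>v x"
  have a: "a \<in> carrier_vec ny" and d: "d \<in> carrier_vec ny" unfolding a_def d_def using Y Da x by auto
  have "(transpose_mat Y * Da + transpose_mat Da * Y) *\<^sub>v x = transpose_mat Y *\<^sub>v d + transpose_mat Da *\<^sub>v a"
    unfolding a_def d_def using Y Da x by (simp add: add_mult_distrib_mat_vec[of _ na na])
  then have "x \<bullet> ((transpose_mat Y * Da + transpose_mat Da * Y) *\<^sub>v x) = 2 * (a \<bullet> d)"
    using Y Da x a d comm_scalar_prod[OF d a]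
    by (simp add: scalar_prod_add_distrib[of x na] scalar_prod_transpose_mult_vec a_def[symmetric] d_def[symmetric])
  moreover have "x \<bullet> ((transpose_mat Da * transpose_mat RW) *\<^sub>v r) = r \<bullet> (RW *\<^sub>v d)"
    unfolding d_def using Da RW x r
    by (simp add: scalar_prod_transpose_mult_vec[of Da ny na] transpose_vec_mult_scalar[of RW nr ny])
  moreover have "r \<bullet> ((RW * Da) *\<^sub>v x) = r \<bullet> (RW *\<^sub>v d)" unfolding d_def using RW Da x by simp
  ultimately show ?thesis
    unfolding a_def d_def using assms
    by (subst scalar_prod_four_block_mat_mult_vec[of _ na na _ nr _ nr]) (auto simp: smult_mat_mult_vec)
qed

lemma lmi3_block12_bilinear_form:
  fixes Y Da C G Dw :: "real mat"
  assumes Y: "Y \<in> carrier_mat ny na" and Da: "Da \<in> carrier_mat ny na"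
    and C: "C \<in> carrier_mat ny nx" and G: "G \<in> carrier_mat nx ny" and Dw: "Dw \<in> carrier_mat ny nw"
    and x: "x \<in> carrier_vec na" and r: "r \<in> carrier_vec nr" and p: "p \<in> carrier_vec nx"
    and q: "q \<in> carrier_vec nx" and w: "w \<in> carrier_vec nw" and r2: "r2 \<in> carrier_vec nr"
  shows "(x @\<^sub>v r) \<bullet> (bdiag (hcat (hcat (transpose_mat Y * C) (transpose_mat Da * transpose_mat G))
      (transpose_mat Y * Dw)) (mu \<cdot>\<^sub>m 1\<^sub>m nr) *\<^sub>v (((p @\<^sub>v q) @\<^sub>v w) @\<^sub>v r2))
    = (transpose_mat C *\<^sub>v (Y *\<^sub>v x)) \<bullet> p + (G *\<^sub>v (Da *\<^sub>v x)) \<bullet> q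
      + (transpose_mat Dw *\<^sub>v (Y *\<^sub>v x)) \<bullet> w + mu * (r \<bullet> r2)"
proof -
  define a where "a = Y *\<^sub>v x"
  define d where "d = Da *\<^sub>v x"
  have a: "a \<in> carrier_vec ny" and d: "d \<in> carrier_vec ny" unfolding a_def d_def using Y Da x by auto
  have "x \<bullet> (hcat (hcat (transpose_mat Y * C) (transpose_mat Da * transpose_mat G)) (transpose_mat Y * Dw)
      *\<^sub>v ((p @\<^sub>v q) @\<^sub>v w)) = (transpose_mat C *\<^sub>v a) \<bullet> p + (G *\<^sub>v d) \<bullet> q + (transpose_mat Dw *\<^sub>v a) \<bullet> w"
  proof -
    have "C *\<^sub>v p \<in> carrier_vec ny" "G *\<^sub>v d \<in> carrier_vec nx" "Dw *\<^sub>v w \<in> carrier_vec ny"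
      using C G Dw p w d by auto
    with a d q G show ?thesis
      using assms
      by (simp add: hcat_mult_vec[of _ na "nx + nx" _ nw] hcat_mult_vec[of _ na nx _ nx]
          scalar_prod_add_distrib[of x na] scalar_prod_transpose_mult_vec transpose_vec_mult_scalar
          comm_scalar_prod[of "C *\<^sub>v p" ny a] comm_scalar_prod[of "Dw *\<^sub>v w" ny a]
          comm_scalar_prod[of q nx "G *\<^sub>v d"] a_def[symmetric] d_def[symmetric])
  qed
  then show ?thesis
    unfolding a_def d_def using assms
    by (subst scalar_prod_bdiag_mult_vec[of _ na "nx + nx + nw" _ nr nr]) (auto simp: smult_mat_mult_vec)
qed

lemma lmi3_block22_quadratic_form:
  fixes P :: "real mat"
  assumes "P \<in> carrier_mat nx nx" "p \<in> carrier_vec nx" "q \<in> carrier_vec nx" "w \<in> carrier_vec nw"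
    "r2 \<in> carrier_vec nr"
  shows "(((p @\<^sub>v q) @\<^sub>v w) @\<^sub>v r2) \<bullet> (bdiag (bdiag (bdiag (c1 \<cdot>\<^sub>m P) (c2 \<cdot>\<^sub>m P)) ((1 / 2) \<cdot>\<^sub>m 1\<^sub>m nw))
      (mu \<cdot>\<^sub>m 1\<^sub>m nr) *\<^sub>v (((p @\<^sub>v q) @\<^sub>v w) @\<^sub>v r2))
    = c1 * (p \<bullet> (P *\<^sub>v p)) + c2 * (q \<bullet> (P *\<^sub>v q)) + 1 / 2 * (w \<bullet> w) + mu * (r2 \<bullet> r2)"
  using assms
  by (simp add: scalar_prod_bdiag_mult_vec[of _ "nx + nx + nw" "nx + nx + nw" _ nr nr]
      scalar_prod_bdiag_mult_vec[of _ "nx + nx" "nx + nx" _ nw nw]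
      scalar_prod_bdiag_mult_vec[of _ nx nx _ nx nx] smult_mat_mult_vec)

lemma lmi3_quadratic_form_nonneg:
  fixes Y Da RW C G Dw P :: "real mat"
  assumes Y: "Y \<in> carrier_mat ny na" and Da: "Da \<in> carrier_mat ny na" and RW: "RW \<in> carrier_mat nr ny"
    and C: "C \<in> carrier_mat ny nx" and G: "G \<in> carrier_mat nx ny" and Dw: "Dw \<in> carrier_mat ny nw"
    and P: "P \<in> carrier_mat nx nx"
    and LMI: "psd_mat (na + nr + (nx + nx + nw + nr)) (lmi3_mat nw nr Y Da RW C G Dw P c1 c2 mu)"
    and x: "x \<in> carrier_vec na" and r: "r \<in> carrier_vec nr" and p: "p \<in> carrier_vec nx"
    and q: "q \<in> carrier_vec nx" and w: "w \<in> carrier_vec nw" and r2: "r2 \<in> carrier_vec nr"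
  shows "0 \<le> 2 * ((Y *\<^sub>v x) \<bullet> (Da *\<^sub>v x))
    + (2 * (r \<bullet> (RW *\<^sub>v (Da *\<^sub>v x))) + 2 * mu * (r \<bullet> r) + 2 * mu * (r \<bullet> r2) + mu * (r2 \<bullet> r2))
    + (c1 * (p \<bullet> (P *\<^sub>v p)) + 2 * ((transpose_mat C *\<^sub>v (Y *\<^sub>v x)) \<bullet> p))
    + (c2 * (q \<bullet> (P *\<^sub>v q)) + 2 * ((G *\<^sub>v (Da *\<^sub>v x)) \<bullet> q))
    + (1 / 2 * (w \<bullet> w) + 2 * ((transpose_mat Dw *\<^sub>v (Y *\<^sub>v x)) \<bullet> w))"
proof -
  have "0 \<le> (x @\<^sub>v r) \<bullet> (four_block_mat (transpose_mat Y * Da + transpose_mat Da * Y)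
      (transpose_mat Da * transpose_mat RW) (RW * Da) ((2 * mu) \<cdot>\<^sub>m 1\<^sub>m nr) *\<^sub>v (x @\<^sub>v r))
    + 2 * ((x @\<^sub>v r) \<bullet> (bdiag (hcat (hcat (transpose_mat Y * C) (transpose_mat Da * transpose_mat G))
      (transpose_mat Y * Dw)) (mu \<cdot>\<^sub>m 1\<^sub>m nr) *\<^sub>v (((p @\<^sub>v q) @\<^sub>v w) @\<^sub>v r2)))
    + (((p @\<^sub>v q) @\<^sub>v w) @\<^sub>v r2) \<bullet> (bdiag (bdiag (bdiag (c1 \<cdot>\<^sub>m P) (c2 \<cdot>\<^sub>m P)) ((1 / 2) \<cdot>\<^sub>m 1\<^sub>m nw))
      (mu \<cdot>\<^sub>m 1\<^sub>m nr) *\<^sub>v (((p @\<^sub>v q) @\<^sub>v w) @\<^sub>v r2))"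
    using LMI assms unfolding lmi3_mat_def
    by (intro psd_four_block_mat_quadratic_form[of "na + nr" "nx + nx + nw + nr"]) auto
  then show ?thesis
    unfolding lmi3_block11_quadratic_form[OF Y Da RW x r] lmi3_block12_bilinear_form[OF Y Da C G Dw x r p q w r2]
      lmi3_block22_quadratic_form[OF P p q w r2]
    by (simp add: algebra_simps)
qed

text \<open>For fixed \<open>x\<close>, the remaining components are set to the minimiser of the quadratic form,
  i.e. LMI3 is evaluated on the Schur complement of its block diagonal part.\<close>
lemma lmi3_imp_bound:
  fixes Y Da RW C G Dw P Pinv :: "real mat"
  assumes Y: "Y \<in> carrier_mat ny na" and Da: "Da \<in> carrier_mat ny na" and RW: "RW \<in> carrier_mat nr ny"
    and C: "C \<in> carrier_mat ny nx" and G: "G \<in> carrier_mat nx ny" and Dw: "Dw \<in> carrier_mat ny nw"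
    and P: "P \<in> carrier_mat nx nx" and Pinv: "Pinv \<in> carrier_mat nx nx" "P * Pinv = 1\<^sub>m nx"
    and c1: "0 < c1" and c2: "0 < c2" and mu: "0 < mu"
    and LMI: "psd_mat (na + nr + (nx + nx + nw + nr)) (lmi3_mat nw nr Y Da RW C G Dw P c1 c2 mu)"
    and x: "x \<in> carrier_vec na"
  shows "(transpose_mat C *\<^sub>v (Y *\<^sub>v x)) \<bullet> (Pinv *\<^sub>v (transpose_mat C *\<^sub>v (Y *\<^sub>v x))) / c1
    + (G *\<^sub>v (Da *\<^sub>v x)) \<bullet> (Pinv *\<^sub>v (G *\<^sub>v (Da *\<^sub>v x))) / c2
    + 2 * ((transpose_mat Dw *\<^sub>v (Y *\<^sub>v x)) \<bullet> (transpose_mat Dw *\<^sub>v (Y *\<^sub>v x)))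
    + (RW *\<^sub>v (Da *\<^sub>v x)) \<bullet> (RW *\<^sub>v (Da *\<^sub>v x)) / mu
    \<le> 2 * ((Y *\<^sub>v x) \<bullet> (Da *\<^sub>v x))"
proof -
  define l1 where "l1 = transpose_mat C *\<^sub>v (Y *\<^sub>v x)"
  define l2 where "l2 = G *\<^sub>v (Da *\<^sub>v x)"
  define k where "k = transpose_mat Dw *\<^sub>v (Y *\<^sub>v x)"
  define \<rho> where "\<rho> = RW *\<^sub>v (Da *\<^sub>v x)"
  have l1: "l1 \<in> carrier_vec nx" and l2: "l2 \<in> carrier_vec nx" and k: "k \<in> carrier_vec nw"
    and \<rho>: "\<rho> \<in> carrier_vec nr"
    unfolding l1_def l2_def k_def \<rho>_def using assms by auto
  define p where "p = (- 1 / c1) \<cdot>\<^sub>v (Pinv *\<^sub>v l1)"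
  define q where "q = (- 1 / c2) \<cdot>\<^sub>v (Pinv *\<^sub>v l2)"
  define w where "w = (- 2) \<cdot>\<^sub>v k"
  define r where "r = (- 1 / mu) \<cdot>\<^sub>v \<rho>"
  define r2 where "r2 = (1 / mu) \<cdot>\<^sub>v \<rho>"
  have "c1 * (p \<bullet> (P *\<^sub>v p)) + 2 * (l1 \<bullet> p) = - (l1 \<bullet> (Pinv *\<^sub>v l1)) / c1"
    unfolding p_def using c1 by (intro quadratic_form_at_minimizer[OF P Pinv _ l1]) simp
  moreover have "c2 * (q \<bullet> (P *\<^sub>v q)) + 2 * (l2 \<bullet> q) = - (l2 \<bullet> (Pinv *\<^sub>v l2)) / c2"
    unfolding q_def using c2 by (intro quadratic_form_at_minimizer[OF P Pinv _ l2]) simp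
  moreover have "1 / 2 * (w \<bullet> w) + 2 * (k \<bullet> w) = - 2 * (k \<bullet> k)"
    unfolding w_def using k by simp
  moreover have "2 * (r \<bullet> \<rho>) + 2 * mu * (r \<bullet> r) + 2 * mu * (r \<bullet> r2) + mu * (r2 \<bullet> r2) = - (\<rho> \<bullet> \<rho>) / mu"
    unfolding r_def r2_def using \<rho> mu by (simp add: field_simps)
  moreover have "p \<in> carrier_vec nx" "q \<in> carrier_vec nx" "w \<in> carrier_vec nw" "r \<in> carrier_vec nr"
    "r2 \<in> carrier_vec nr"
    unfolding p_def q_def w_def r_def r2_def using Pinv l1 l2 k \<rho> by auto
  ultimately have "0 \<le> 2 * ((Y *\<^sub>v x) \<bullet> (Da *\<^sub>v x)) - (\<rho> \<bullet> \<rho>) / mu - (l1 \<bullet> (Pinv *\<^sub>v l1)) / c1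
      - (l2 \<bullet> (Pinv *\<^sub>v l2)) / c2 - 2 * (k \<bullet> k)"
    using lmi3_quadratic_form_nonneg[OF Y Da RW C G Dw P LMI x, folded l1_def l2_def k_def \<rho>_def,
      of r p q w r2] by simp
  then show ?thesis unfolding l1_def l2_def k_def \<rho>_def by simp
qed

text \<open>With \<open>a = Y x\<close>, \<open>d = D\<^sub>a x\<close>, \<open>e = L d\<close>, \<open>c = C\<^sup>T a\<close> and \<open>\<tau> = d - C e\<close>: completing the
  square gives \<open>\<tau>\<^sup>T S\<^sup>-\<^sup>1 \<tau> \<ge> 4 a\<^sup>T \<tau> - 4 a\<^sup>T S a\<close>, Young's inequality bounds the cross term
  \<open>2 c\<^sup>T e \<le> \<gamma> e\<^sup>T P e + c\<^sup>T P\<^sup>-\<^sup>1 c / \<gamma>\<close>, and LMI3 absorbs what remains.\<close>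
lemma lmi3_imp_residual_quadratic_bound:
  fixes Y Da RW C G Dw P Pinv L S Si :: "real mat" and gamma mu :: real
  assumes Y: "Y \<in> carrier_mat ny na" and Da: "Da \<in> carrier_mat ny na" and RW: "RW \<in> carrier_mat nr ny"
    and C: "C \<in> carrier_mat ny nx" and G: "G \<in> carrier_mat nx ny" and Dw: "Dw \<in> carrier_mat ny nw"
    and P: "psd_mat nx P" and Pinv: "Pinv \<in> carrier_mat nx nx" "P * Pinv = 1\<^sub>m nx"
    and L: "L = Pinv * G" and gamma: "0 < gamma" and mu: "0 < mu"
    and S: "psd_mat ny S" and Si: "Si \<in> carrier_mat ny ny" "S * Si = 1\<^sub>m ny"
    and S_le: "\<And>z. z \<in> carrier_vec ny \<Longrightarrow> z \<bullet> (S *\<^sub>v z)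
      \<le> (transpose_mat C *\<^sub>v z) \<bullet> (Pinv *\<^sub>v (transpose_mat C *\<^sub>v z)) + (transpose_mat Dw *\<^sub>v z) \<bullet> (transpose_mat Dw *\<^sub>v z)"
    and LMI: "psd_mat (na + nr + (nx + nx + nw + nr))
      (lmi3_mat nw nr Y Da RW C G Dw P (1 / (2 + 1 / gamma)) (1 / gamma) mu)"
    and x: "x \<in> carrier_vec na"
  shows "(RW *\<^sub>v (Da *\<^sub>v x)) \<bullet> (RW *\<^sub>v (Da *\<^sub>v x)) / mu
    \<le> 1 / 2 * (((1\<^sub>m ny - C * L) * Da *\<^sub>v x) \<bullet> (Si *\<^sub>v ((1\<^sub>m ny - C * L) * Da *\<^sub>v x)))"
proof -
  note Pc = psd_matD(1)[OF P]
  define a where "a = Y *\<^sub>v x"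
  define d where "d = Da *\<^sub>v x"
  define e where "e = L *\<^sub>v d"
  define c where "c = transpose_mat C *\<^sub>v a"
  define k where "k = transpose_mat Dw *\<^sub>v a"
  define \<tau> where "\<tau> = (1\<^sub>m ny - C * L) * Da *\<^sub>v x"
  have L': "L \<in> carrier_mat nx ny" unfolding L using Pinv G by simp
  have a: "a \<in> carrier_vec ny" and d: "d \<in> carrier_vec ny" and e: "e \<in> carrier_vec nx"
    and c: "c \<in> carrier_vec nx" and k: "k \<in> carrier_vec nw"
    unfolding a_def d_def e_def c_def k_def using Y Da L' C Dw x by auto
  have \<tau>: "\<tau> = d - C *\<^sub>v e"
    unfolding \<tau>_def d_def e_def using C L' Da x
    by (simp add: minus_mult_distrib_mat_vec[of _ ny ny] assoc_mult_mat_vec[of _ ny ny _ na x] minus_carrier_mat)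
  have \<tau>c: "\<tau> \<in> carrier_vec ny" unfolding \<tau> using C d e by simp
  have "e \<bullet> (P *\<^sub>v e) = (G *\<^sub>v d) \<bullet> (Pinv *\<^sub>v (G *\<^sub>v d))"
    unfolding e_def L using quadratic_form_inverse[OF Pc Pinv, of "G *\<^sub>v d"] Pinv G d by simp
  then have lmi: "(2 + 1 / gamma) * (c \<bullet> (Pinv *\<^sub>v c)) + gamma * (e \<bullet> (P *\<^sub>v e)) + 2 * (k \<bullet> k)
      + (RW *\<^sub>v d) \<bullet> (RW *\<^sub>v d) / mu \<le> 2 * (a \<bullet> d)"
    using lmi3_imp_bound[OF Y Da RW C G Dw Pc Pinv _ _ mu LMI x] gamma
    unfolding a_def[symmetric] d_def[symmetric] c_def[symmetric] k_def[symmetric] by (simp add: ac_simps)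
  have "2 * ((2 \<cdot>\<^sub>v a) \<bullet> \<tau>) \<le> (2 \<cdot>\<^sub>v a) \<bullet> (S *\<^sub>v (2 \<cdot>\<^sub>v a)) + \<tau> \<bullet> (Si *\<^sub>v \<tau>)"
    using a \<tau>c by (intro two_scalar_prod_le_quadratic_forms[OF S Si]) auto
  then have square: "4 * (a \<bullet> \<tau>) - 4 * (a \<bullet> (S *\<^sub>v a)) \<le> \<tau> \<bullet> (Si *\<^sub>v \<tau>)"
    using a \<tau>c psd_matD(1)[OF S] by (simp add: mult_mat_vec)
  have covariance: "a \<bullet> (S *\<^sub>v a) \<le> c \<bullet> (Pinv *\<^sub>v c) + k \<bullet> k"
    using S_le[OF a] unfolding c_def k_def .
  have "a \<bullet> (C *\<^sub>v e) = c \<bullet> e"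
    unfolding c_def using scalar_prod_transpose_mult_vec[OF C e a] comm_scalar_prod[OF e c[unfolded c_def]] by simp
  then have cross: "a \<bullet> \<tau> = a \<bullet> d - c \<bullet> e" unfolding \<tau> using a d C e by (simp add: scalar_prod_minus_distrib)
  have "2 * ((gamma \<cdot>\<^sub>v e) \<bullet> c) \<le> (gamma \<cdot>\<^sub>v e) \<bullet> (P *\<^sub>v (gamma \<cdot>\<^sub>v e)) + c \<bullet> (Pinv *\<^sub>v c)"
    using e c by (intro two_scalar_prod_le_quadratic_forms[OF P Pinv]) auto
  then have "gamma * (2 * (c \<bullet> e)) \<le> gamma * (gamma * (e \<bullet> (P *\<^sub>v e))) + c \<bullet> (Pinv *\<^sub>v c)"
    using e c Pc comm_scalar_prod[OF e c] by (simp add: mult_mat_vec algebra_simps)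
  also have "\<dots> = gamma * (gamma * (e \<bullet> (P *\<^sub>v e)) + c \<bullet> (Pinv *\<^sub>v c) / gamma)"
    using gamma by (simp add: algebra_simps)
  finally have young: "2 * (c \<bullet> e) \<le> gamma * (e \<bullet> (P *\<^sub>v e)) + c \<bullet> (Pinv *\<^sub>v c) / gamma"
    using gamma by simp
  have "(2 + 1 / gamma) * (c \<bullet> (Pinv *\<^sub>v c)) = 2 * (c \<bullet> (Pinv *\<^sub>v c)) + c \<bullet> (Pinv *\<^sub>v c) / gamma"
    by (simp add: field_simps)
  with lmi square covariance cross young show ?thesis unfolding \<tau>_def[symmetric] d_def[symmetric] by linarith
qed

lemma lmi3_imp_residual_sensitivity_psd:
  fixes Y Da RW C G Dw P Pinv L S Si W :: "real mat" and gamma mu :: real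
  assumes Y: "Y \<in> carrier_mat ny na" and Da: "Da \<in> carrier_mat ny na" and RW: "RW \<in> carrier_mat nr ny"
    and C: "C \<in> carrier_mat ny nx" and G: "G \<in> carrier_mat nx ny" and Dw: "Dw \<in> carrier_mat ny nw"
    and P: "psd_mat nx P" and Pinv: "Pinv \<in> carrier_mat nx nx" "P * Pinv = 1\<^sub>m nx"
    and L: "L = Pinv * G" and gamma: "0 < gamma" and mu: "0 < mu"
    and S: "psd_mat ny S" and Si: "Si \<in> carrier_mat ny ny" "S * Si = 1\<^sub>m ny"
    and S_le: "\<And>z. z \<in> carrier_vec ny \<Longrightarrow> z \<bullet> (S *\<^sub>v z)
      \<le> (transpose_mat C *\<^sub>v z) \<bullet> (Pinv *\<^sub>v (transpose_mat C *\<^sub>v z)) + (transpose_mat Dw *\<^sub>v z) \<bullet> (transpose_mat Dw *\<^sub>v z)"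
    and LMI: "psd_mat (na + nr + (nx + nx + nw + nr))
      (lmi3_mat nw nr Y Da RW C G Dw P (1 / (2 + 1 / gamma)) (1 / gamma) mu)"
    and W: "W = transpose_mat RW * RW"
  shows "psd_mat na ((1 / 2) \<cdot>\<^sub>m (transpose_mat ((1\<^sub>m ny - C * L) * Da) * Si * ((1\<^sub>m ny - C * L) * Da))
    - (1 / mu) \<cdot>\<^sub>m (transpose_mat Da * W * Da))"
proof -
  define T where "T = (1\<^sub>m ny - C * L) * Da"
  have "L \<in> carrier_mat nx ny" unfolding L using Pinv G by simp
  then have T: "T \<in> carrier_mat ny na"
    unfolding T_def by (intro mult_carrier_mat[OF minus_carrier_mat[OF mult_carrier_mat[OF C]] Da])
  have Si_sym: "transpose_mat Si = Si"
    using transpose_inverse_of_sym_mat[OF psd_matD(1,2)[OF S] Si] .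
  have W': "W \<in> carrier_mat ny ny" "transpose_mat W = W"
    unfolding W using RW transpose_mult[of "transpose_mat RW" ny nr RW ny] by auto
  have carriers: "transpose_mat T * Si * T \<in> carrier_mat na na" "transpose_mat Da * W * Da \<in> carrier_mat na na"
    using T Si Da W' by auto
  have "0 \<le> x \<bullet> (((1 / 2) \<cdot>\<^sub>m (transpose_mat T * Si * T) - (1 / mu) \<cdot>\<^sub>m (transpose_mat Da * W * Da)) *\<^sub>v x)"
    if x: "x \<in> carrier_vec na" for x
  proof -
    have "x \<bullet> ((transpose_mat Da * W * Da) *\<^sub>v x) = (RW *\<^sub>v (Da *\<^sub>v x)) \<bullet> (RW *\<^sub>v (Da *\<^sub>v x))"
      using quadratic_form_congruence_transpose[OF Da W'(1) x]
        quadratic_form_gram[of "transpose_mat RW" ny nr "Da *\<^sub>v x"] RW Da x unfolding W by simp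
    then show ?thesis
      using lmi3_imp_residual_quadratic_bound[OF assms(1-17) x, folded T_def]
      by (simp add: quadratic_form_smult_minus[OF carriers x] quadratic_form_congruence_transpose[OF T Si(1) x])
  qed
  moreover have "transpose_mat ((1 / 2) \<cdot>\<^sub>m (transpose_mat T * Si * T) - (1 / mu) \<cdot>\<^sub>m (transpose_mat Da * W * Da))
      = (1 / 2) \<cdot>\<^sub>m (transpose_mat T * Si * T) - (1 / mu) \<cdot>\<^sub>m (transpose_mat Da * W * Da)"
    using carriers by (simp only: transpose_minus[OF smult_carrier_mat smult_carrier_mat] transpose_smult_mat
        transpose_congruence_sym_mat[OF T Si(1) Si_sym] transpose_congruence_sym_mat[OF Da W'])
  ultimately show ?thesis unfolding psd_mat_def T_def[symmetric] using carriers by (simp add: minus_carrier_mat)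
qed

theorem theorem2:
  fixes nx ny nw na nr :: nat
    and A C Bw Dw W RW P Zt G Y :: "real mat"
    and j :: "nat \<Rightarrow> nat"
    and gamma mu :: real
  assumes nx_pos: "0 < nx"
    and A: "A \<in> carrier_mat nx nx" and C: "C \<in> carrier_mat ny nx"
    and Bw: "Bw \<in> carrier_mat nx nw" and Dw: "Dw \<in> carrier_mat ny nw"
    and det: "detectable nx ny A C" and stab: "stabilizable nx nw A Bw"
    and j_mono: "\<And>a b. a < b \<Longrightarrow> b < na \<Longrightarrow> j a < j b"
    and j_bound: "\<And>a. a < na \<Longrightarrow> j a < ny"
    and W: "psd_mat ny W"
    and gamma: "0 < gamma"
    and RW: "RW \<in> carrier_mat nr ny" and W_fact: "W = transpose_mat RW * RW"
    and mu: "0 < mu"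
    and P: "pd_mat nx P" and Zt: "pd_mat ny Zt"
    and G: "G \<in> carrier_mat nx ny" and Y: "Y \<in> carrier_mat ny na"
    and LMI1: "pd_mat (nx + nx + nw)
       (sym3 P (P * A - G * C) (P * Bw - G * Dw) P (0\<^sub>m nx nw) (1\<^sub>m nw))"
    and LMI2: "pd_mat (ny + nx + nw)
       (sym3 Zt (Zt * C) (Zt * Dw) P (0\<^sub>m nx nw) (1\<^sub>m nw))"
    and LMI3: "psd_mat (na + nr + (nx + nx + nw + nr))
       (let Da = attack_mat ny na j;
            M = four_block_mat (transpose_mat Y * Da + transpose_mat Da * Y)
                  (transpose_mat Da * transpose_mat RW) (RW * Da) ((2 * mu) \<cdot>\<^sub>m 1\<^sub>m nr);
            Gamma1 = hcat (hcat (transpose_mat Y * C) (transpose_mat Da * transpose_mat G))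
                          (transpose_mat Y * Dw);
            Gamma2 = bdiag (bdiag ((1 / (2 + 1 / gamma)) \<cdot>\<^sub>m P) ((1 / gamma) \<cdot>\<^sub>m P))
                           ((1 / 2) \<cdot>\<^sub>m 1\<^sub>m nw);
            N = bdiag Gamma1 (mu \<cdot>\<^sub>m 1\<^sub>m nr);
            Q = bdiag Gamma2 (mu \<cdot>\<^sub>m 1\<^sub>m nr)
        in four_block_mat M N (transpose_mat N) Q)"
    and Sigma_inv: "invertible_mat (Sigma_rw nx A C Bw Dw (the (mat_inverse P) * G))"
  shows "let L = the (mat_inverse P) * G; lambda = 1 / mu; Da = attack_mat ny na j;
             S = Sigma_rw nx A C Bw Dw L;
             T = (1\<^sub>m ny - C * L) * Da
         in rho (A - L * C) < 1 \<and>
            psd_mat na ((1 / 2) \<cdot>\<^sub>m (transpose_mat T * the (mat_inverse S) * T)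
                        - lambda \<cdot>\<^sub>m (transpose_mat Da * W * Da))"
proof -
  have Pc: "P \<in> carrier_mat nx nx" using P unfolding pd_mat_def by simp
  define Pinv where "Pinv = the (mat_inverse P)"
  note Pinv = the_mat_inverse[OF Pc det_pd_mat_neq_0[OF P], folded Pinv_def]
  define L where "L = Pinv * G"
  have L: "L \<in> carrier_mat nx ny" unfolding L_def using Pinv G by simp
  have "P * (A - L * C) = P * A - G * C" "P * (Bw - L * Dw) = P * Bw - G * Dw"
    unfolding L_def using mult_minus_inverse_mult[OF Pc Pinv(3,1)] A Bw C Dw G by auto
  note S = observer_lmi_imp_stability_and_covariance_bound[OF nx_pos P Pinv(3,1) A C Bw Dw L LMI1[folded this]]
  note Si = the_mat_inverse[OF psd_matD(1)[OF S(2)]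
      det_invertible_mat_neq_0[OF psd_matD(1)[OF S(2)] Sigma_inv[folded Pinv_def L_def]]]
  have "attack_mat ny na j \<in> carrier_mat ny na" unfolding attack_mat_def by simp
  from lmi3_imp_residual_sensitivity_psd[OF Y this RW C G Dw pd_mat_imp_psd_mat[OF P] Pinv(3,1)
      L_def gamma mu S(2) Si(3,1) S(3) LMI3[unfolded Let_def, folded lmi3_mat_def] W_fact]
  show ?thesis using S(1) unfolding Let_def Pinv_def[symmetric] L_def[symmetric] by simp
qed

end
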